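(* Let $N\ge1$, $1<p<\infty$, $0<sp<N$, $m>1$, $\chi>0$ and $M>0$. Then: - if $1<m<m_c$, then $\inf_{\mathcal Y_M}\mathcal F_{s,p}=-\infty$; - if $m=m_c$, then $\inf_{\mathcal Y_M}\mathcal F_{s,p}=0$ when $0<M\le M_c$, and $\inf_{\mathcal Y_M}\mathcal F_{s,p}=-\infty$ when $M>M_c$; - if $m>m_c$, then $\inf_{\mathcal Y_M}\mathcal F_{s,p}\in(-\infty,0)$.
   Context: Riesz kernel. $K_{s/2}(x)=c_{N,s/2}|x|^{s-N}$, where $c_{N,s}=\pi^{-N/2}2^{-2s}\Gamma(N/2-s)/\Gamma(s)$. Exponents. $p'=p/(p-1)$, $p^*_s=Np/(N-sp)$, $m_c:=p'-sp'/N$, and $\vartheta_0:=1-m'/p^*_s$. HLS constant. $$H^*_{m,s}:=\sup\Big\{\frac{\|K_{s/2}*h\|_{p'}^{p'}}{\|h\|_1^{p'\vartheta_0}\|h\|_m^{p'(1-\vartheta_0)}}:\ h\in L^1\cap L^m\setminus\{0\}\Big\}.$$ Critical mass. $M_c:=\big(p^*_s/(\chi H^*_{m_c,s})\big)^{N/(sp')}$. Admissible class. $\mathcal Y_M=\{\rho\in L^1_+\cap L^m(\mathbb R^N):\ \int\rho=M,\ \int x\rho=0\}$. Free energy. $\displaystyle\mathcal F_{s,p}(\rho)=\frac1{m-1}\int\rho^m-\frac{\chi}{p'}\int(K_{s/2}*\rho)^{p'}$. *)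

theory Defs
  imports "HOL-Analysis.Analysis"
begin

text \<open>Ambient space: a Euclidean space 'a of dimension N = DIM('a), with Lebesgue measure lborel.\<close>

definition conj_exp :: "real \<Rightarrow> real" where
  "conj_exp p = p / (p - 1)"

definition sob_exp :: "nat \<Rightarrow> real \<Rightarrow> real \<Rightarrow> real" where
  "sob_exp N s p = real N * p / (real N - s * p)"

definition crit_exp :: "nat \<Rightarrow> real \<Rightarrow> real \<Rightarrow> real" where
  "crit_exp N s p = conj_exp p - s * conj_exp p / real N"

definition theta0 :: "nat \<Rightarrow> real \<Rightarrow> real \<Rightarrow> real \<Rightarrow> real" where
  "theta0 N s p m = 1 - conj_exp m / sob_exp N s p"

text \<open>Riesz constant c_{N,s} and kernel K_{s/2}(x) = c_{N,s/2} |x|^(s-N).\<close>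
definition riesz_const :: "nat \<Rightarrow> real \<Rightarrow> real" where
  "riesz_const N s = pi powr (- real N / 2) * 2 powr (-2 * s) * Gamma (real N / 2 - s) / Gamma s"

definition riesz_kernel :: "real \<Rightarrow> 'a::euclidean_space \<Rightarrow> real" where
  "riesz_kernel s x = riesz_const DIM('a) (s / 2) * norm x powr (s - real DIM('a))"

definition riesz_conv :: "real \<Rightarrow> ('a::euclidean_space \<Rightarrow> real) \<Rightarrow> 'a \<Rightarrow> real" where
  "riesz_conv s h x = (\<integral>y. riesz_kernel s (x - y) * h y \<partial>lborel)"

definition riesz_conv_nn :: "real \<Rightarrow> ('a::euclidean_space \<Rightarrow> real) \<Rightarrow> 'a \<Rightarrow> ennreal" where
  "riesz_conv_nn s h x = (\<integral>\<^sup>+y. ennreal (riesz_kernel s (x - y) * h y) \<partial>lborel)"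

definition enn_powr :: "ennreal \<Rightarrow> real \<Rightarrow> ennreal" where
  "enn_powr e q = (if e = \<infinity> then \<infinity> else ennreal (enn2real e powr q))"

definition in_Lq :: "real \<Rightarrow> ('a::euclidean_space \<Rightarrow> real) \<Rightarrow> bool" where
  "in_Lq q h \<longleftrightarrow> h \<in> borel_measurable lborel \<and> integrable lborel (\<lambda>x. \<bar>h x\<bar> powr q)"

definition Lq_norm :: "real \<Rightarrow> ('a::euclidean_space \<Rightarrow> real) \<Rightarrow> real" where
  "Lq_norm q h = (\<integral>x. \<bar>h x\<bar> powr q \<partial>lborel) powr (1 / q)"

definition HLS_const :: "'a::euclidean_space itself \<Rightarrow> real \<Rightarrow> real \<Rightarrow> real \<Rightarrow> ereal" where
  "HLS_const _ p m s =
     (let N = DIM('a); q = conj_exp p; th = theta0 N s p m in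
      Sup ((\<lambda>h::'a \<Rightarrow> real.
              enn2ereal (\<integral>\<^sup>+x. ennreal (\<bar>riesz_conv s h x\<bar> powr q) \<partial>lborel)
              / ereal (Lq_norm 1 h powr (q * th) * Lq_norm m h powr (q * (1 - th))))
           ` {h. in_Lq 1 h \<and> in_Lq m h \<and> \<not> (AE x in lborel. h x = 0)}))"

definition crit_mass :: "'a::euclidean_space itself \<Rightarrow> real \<Rightarrow> real \<Rightarrow> real \<Rightarrow> real" where
  "crit_mass A p s chi =
     (let N = DIM('a) in
      (sob_exp N s p / (chi * real_of_ereal (HLS_const A p (crit_exp N s p) s)))
        powr (real N / (s * conj_exp p)))"

definition adm_class :: "real \<Rightarrow> real \<Rightarrow> ('a::euclidean_space \<Rightarrow> real) set" where
  "adm_class m M = {\<rho>. (\<forall>x. 0 \<le> \<rho> x) \<and> integrable lborel \<rho> \<and> in_Lq m \<rho>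
      \<and> (\<integral>x. \<rho> x \<partial>lborel) = M
      \<and> integrable lborel (\<lambda>x. \<rho> x *\<^sub>R x) \<and> (\<integral>x. \<rho> x *\<^sub>R x \<partial>lborel) = 0}"

text \<open>Free energy F_{s,p}, with values in the extended reals (the interaction term may be infinite).\<close>
definition free_energy :: "real \<Rightarrow> real \<Rightarrow> real \<Rightarrow> real \<Rightarrow> ('a::euclidean_space \<Rightarrow> real) \<Rightarrow> ereal" where
  "free_energy s p m chi \<rho> =
     ereal (1 / (m - 1) * (\<integral>x. \<rho> x powr m \<partial>lborel))
     - ereal (chi / conj_exp p) *
       enn2ereal (\<integral>\<^sup>+x. enn_powr (riesz_conv_nn s \<rho> x) (conj_exp p) \<partial>lborel)"

end

theory Submission
  imports Defs
begin

text \<open>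
  Write \<open>q = p'\<close>, \<open>e = s q / N\<close>, and let \<open>\<rho>\<^sub>c(x) = c\<^sup>N \<rho>(c x)\<close> be the mass-preserving dilation.
  Then \<open>\<integral>\<rho>\<^sub>c\<^sup>m = c\<^bsup>N(m-1)\<^esup> \<integral>\<rho>\<^sup>m\<close> while the interaction scales like \<open>c\<^bsup>N(m\<^sub>c-1)\<^esup>\<close>, so the sign of
  \<open>m - m\<^sub>c\<close> decides which term of \<open>F\<close> dominates along \<open>c \<rightarrow> \<infinity>\<close> or \<open>c \<rightarrow> 0\<close>; this gives the
  value \<open>-\<infinity>\<close> for \<open>m < m\<^sub>c\<close> and a negative value for \<open>m > m\<^sub>c\<close>. For \<open>m > m\<^sub>c\<close> the infimum is
  finite: splitting the kernel at \<open>|x| = 1\<close>, Young's inequality bounds the interaction by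
  \<open>C(M) (1 + (\<integral>\<rho>\<^sup>m)\<^sup>\<beta>)\<close> with \<open>\<beta> < 1\<close>, which the entropy absorbs.
  At \<open>m = m\<^sub>c\<close> both terms scale alike and \<open>F(\<rho>\<^sub>c) = c\<^bsup>N(m-1)\<^esup> F(\<rho>)\<close>. By the definition of \<open>H\<^sup>*\<close> the
  interaction of \<open>\<rho> \<in> Y\<^sub>M\<close> is at most \<open>H\<^sup>* M\<^sup>e \<integral>\<rho>\<^sup>m\<close>, so \<open>F \<ge> 0\<close> on \<open>Y\<^sub>M\<close> when \<open>M \<le> M\<^sub>c\<close>, and
  \<open>F(\<rho>\<^sub>c) \<rightarrow> 0\<close> as \<open>c \<rightarrow> 0\<close>. For \<open>M > M\<^sub>c\<close> a near-optimiser of the HLS quotient, truncated,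
  normalised to mass \<open>M\<close> and centred, has negative energy, which dilation sends to \<open>-\<infinity>\<close>.
\<close>

lemma enn_powr_ennreal[simp]: "0 \<le> x \<Longrightarrow> enn_powr (ennreal x) q = ennreal (x powr q)"
  by (simp add: enn_powr_def)

lemma enn_powr_top[simp]: "enn_powr top q = top"
  by (simp add: enn_powr_def)

lemma enn_powr_zero[simp]: "enn_powr 0 q = 0"
  by (simp add: enn_powr_def)

lemma enn_powr_one[simp]: "enn_powr a 1 = a"
  by (cases a) (auto simp: enn_powr_def)

lemma enn_powr_eq_top_iff: "enn_powr a q = top \<longleftrightarrow> a = top"
  by (simp add: enn_powr_def)

lemma enn_powr_mono:
  assumes "0 \<le> q" "a \<le> b" shows "enn_powr a q \<le> enn_powr b q"
proof (cases "b = top")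
  case False
  then obtain y where b: "b = ennreal y" "0 \<le> y" by (cases b) auto
  then have "a \<noteq> top" using assms(2) by (metis ennreal_neq_top top_unique)
  then obtain x where a: "a = ennreal x" "0 \<le> x" by (cases a) auto
  have xy: "x \<le> y" using assms(2) a b by simp
  show ?thesis
  proof (cases "x = 0")
    case True then show ?thesis using a b by simp
  next
    case False then show ?thesis using a b xy assms by (auto intro!: ennreal_leI powr_mono2)
  qed
qed simp

lemma enn_powr_pos: "0 < a \<Longrightarrow> 0 < enn_powr a q"
  by (cases a) (auto simp: enn_powr_def)

lemma enn_powr_mult:
  assumes "0 < q" shows "enn_powr (a * b) q = enn_powr a q * enn_powr b q"
proof -
  have fin: "enn_powr (ennreal x * ennreal y) q = enn_powr (ennreal x) q * enn_powr (ennreal y) q"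
    if "0 \<le> x" "0 \<le> y" for x y :: real
    using that by (simp add: ennreal_mult[symmetric] powr_mult)
  have inf: "enn_powr (ennreal x * top) q = enn_powr (ennreal x) q * enn_powr top q"
    "enn_powr (top * ennreal x) q = enn_powr top q * enn_powr (ennreal x) q"
    if "0 \<le> x" for x :: real
    using that assms by (cases "x = 0"; simp add: ennreal_mult_top ennreal_top_mult)+
  show ?thesis
    by (cases a; cases b) (auto simp: fin inf)
qed

lemma enn_powr_powr:
  assumes "0 < q" "0 < r" shows "enn_powr (enn_powr a q) r = enn_powr a (q * r)"
  by (cases a) (auto simp: enn_powr_def powr_powr)

lemma enn_powr_mult_self:
  assumes "0 < q" shows "enn_powr a q * a = enn_powr a (q + 1)"
proof (cases "a = top")
  case True then show ?thesis by (simp add: enn_powr_eq_top_iff)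
next
  case False
  then obtain x where x: "a = ennreal x" "0 \<le> x" by (cases a) auto
  then show ?thesis using assms
    by (cases "x = 0") (simp_all add: ennreal_mult[symmetric] powr_add)
qed

lemma enn_powr_add_le:
  assumes "0 \<le> q" shows "enn_powr (a + b) q \<le> ennreal (2 powr q) * (enn_powr a q + enn_powr b q)"
proof (cases "a = top \<or> b = top")
  case True then show ?thesis by (auto simp: ennreal_mult_top)
next
  case False
  then obtain x y where xy: "a = ennreal x" "b = ennreal y" "0 \<le> x" "0 \<le> y"
    by (metis ennreal_cases)
  have "(x + y) powr q \<le> (2 * max x y) powr q"
    using xy assms by (intro powr_mono2) auto
  also have "\<dots> = 2 powr q * max x y powr q" using xy by (simp add: powr_mult)
  also have "\<dots> \<le> 2 powr q * (x powr q + y powr q)"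
    by (intro mult_left_mono) (auto simp: max_def)
  finally show ?thesis using xy
    by (simp add: ennreal_plus[symmetric] ennreal_mult[symmetric] del: ennreal_plus)
qed

lemma measurable_enn_powr[measurable]:
  assumes [measurable]: "f \<in> borel_measurable M"
  shows "(\<lambda>x. enn_powr (f x) q) \<in> borel_measurable M"
  unfolding enn_powr_def by measurable

lemma enn_powr_SUP_le:
  assumes q: "0 < q"
  shows "enn_powr (SUP n. c n) q \<le> (SUP n. enn_powr (c n :: ennreal) q)"
proof (rule ccontr)
  let ?L = "SUP n. enn_powr (c n) q"
  assume "\<not> ?thesis"
  then have lt: "?L < enn_powr (SUP n. c n) q" by simp
  have "c n \<le> enn_powr ?L (1/q)" for n
  proof -
    have "enn_powr (c n) q \<le> ?L" by (rule SUP_upper) simp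
    then have "enn_powr (enn_powr (c n) q) (1/q) \<le> enn_powr ?L (1/q)"
      using q by (intro enn_powr_mono) auto
    then show ?thesis using q by (simp add: enn_powr_powr)
  qed
  then have "(SUP n. c n) \<le> enn_powr ?L (1/q)" by (rule SUP_least)
  then have "enn_powr (SUP n. c n) q \<le> enn_powr (enn_powr ?L (1/q)) q"
    using q by (intro enn_powr_mono) auto
  also have "\<dots> = ?L" using q by (simp add: enn_powr_powr)
  finally show False using lt by simp
qed

section \<open>Hoelder-type inequalities for nonnegative integrals\<close>

lemma powr_mult_le_weighted_sum:
  fixes x y a b \<theta> :: real
  assumes "0 \<le> x" "0 \<le> y" "0 < a" "0 < b" "0 < \<theta>" "\<theta> < 1"
  shows "x powr \<theta> * y powr (1-\<theta>) \<le> a powr \<theta> * b powr (1-\<theta>) * (\<theta>/a * x + (1-\<theta>)/b * y)"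
proof (cases "x = 0 \<or> y = 0")
  case True then show ?thesis using assms by auto
next
  case False
  then have "0 < x" "0 < y" using assms by auto
  then have "(x / a) powr \<theta> * (y / b) powr (1-\<theta>) \<le> \<theta> * (x / a) + (1-\<theta>) * (y / b)"
    using assms by (intro Youngs_inequality_0) auto
  moreover have "(x / a) powr \<theta> * (y / b) powr (1-\<theta>) = x powr \<theta> * y powr (1-\<theta>) / (a powr \<theta> * b powr (1-\<theta>))"
    using \<open>0 < x\<close> \<open>0 < y\<close> assms by (simp add: powr_divide)
  ultimately show ?thesis using assms by (simp add: field_simps)
qed

lemma nn_integral_Holder:
  fixes f g :: "'b \<Rightarrow> real"
  assumes [measurable]: "f \<in> borel_measurable M" "g \<in> borel_measurable M"
    and nnf: "\<And>x. 0 \<le> f x" and nng: "\<And>x. 0 \<le> g x" and th: "0 < \<theta>" "\<theta> < 1"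
  shows "(\<integral>\<^sup>+x. ennreal (f x powr \<theta> * g x powr (1-\<theta>)) \<partial>M)
     \<le> enn_powr (\<integral>\<^sup>+x. f x \<partial>M) \<theta> * enn_powr (\<integral>\<^sup>+x. g x \<partial>M) (1-\<theta>)"
proof -
  define A where "A = (\<integral>\<^sup>+x. f x \<partial>M)"
  define B where "B = (\<integral>\<^sup>+x. g x \<partial>M)"
  consider "A = 0 \<or> B = 0" | "A \<noteq> 0" "B \<noteq> 0" "A = top \<or> B = top"
    | a b where "A = ennreal a" "B = ennreal b" "0 < a" "0 < b"
  proof (cases "A = 0 \<or> B = 0 \<or> A = top \<or> B = top")
    case False
    then obtain a b where "A = ennreal a" "B = ennreal b" "0 \<le> a" "0 \<le> b"
      by (metis ennreal_cases)
    with False that(3) show ?thesis by fastforce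
  qed auto
  then show ?thesis
  proof cases
    case 1
    then have "AE x in M. f x = 0 \<or> g x = 0"
      unfolding A_def B_def using nnf nng by (auto simp: nn_integral_0_iff_AE elim!: AE_mp)
    then have "(\<integral>\<^sup>+x. ennreal (f x powr \<theta> * g x powr (1-\<theta>)) \<partial>M) = 0"
      by (subst nn_integral_0_iff_AE) (auto elim!: AE_mp)
    then show ?thesis by simp
  next
    case 2
    then have "enn_powr A \<theta> * enn_powr B (1-\<theta>) = top"
      using enn_powr_pos[of A \<theta>] enn_powr_pos[of B "1-\<theta>"]
      by (auto simp: ennreal_mult_top ennreal_top_mult enn_powr_eq_top_iff zero_less_iff_neq_zero)
    then show ?thesis unfolding A_def B_def by simp
  next
    case (3 a b)
    define C where "C = a powr \<theta> * b powr (1-\<theta>)"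
    have "(\<integral>\<^sup>+x. ennreal (f x powr \<theta> * g x powr (1-\<theta>)) \<partial>M)
        \<le> (\<integral>\<^sup>+x. ennreal (C*\<theta>/a) * ennreal (f x) + ennreal (C*(1-\<theta>)/b) * ennreal (g x) \<partial>M)"
    proof (rule nn_integral_mono)
      fix x
      have "f x powr \<theta> * g x powr (1-\<theta>) \<le> (C*\<theta>/a) * f x + (C*(1-\<theta>)/b) * g x"
        using powr_mult_le_weighted_sum[OF nnf nng, of a b \<theta> x x] 3 th
        by (simp add: C_def algebra_simps)
      then have "ennreal (f x powr \<theta> * g x powr (1-\<theta>)) \<le> ennreal ((C*\<theta>/a) * f x + (C*(1-\<theta>)/b) * g x)"
        by (rule ennreal_leI)
      moreover have "0 \<le> C*\<theta>/a" "0 \<le> C*(1-\<theta>)/b"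
        using 3 th by (simp_all add: C_def)
      ultimately show "ennreal (f x powr \<theta> * g x powr (1-\<theta>))
          \<le> ennreal (C*\<theta>/a) * ennreal (f x) + ennreal (C*(1-\<theta>)/b) * ennreal (g x)"
        using nnf[of x] nng[of x] by (metis ennreal_plus ennreal_mult mult_nonneg_nonneg)
    qed
    also have "\<dots> = ennreal (C*\<theta>/a) * A + ennreal (C*(1-\<theta>)/b) * B"
      unfolding A_def B_def by (simp add: nn_integral_add nn_integral_cmult)
    also have "\<dots> = ennreal C"
      using 3 th by (simp add: C_def ennreal_mult[symmetric] ennreal_plus[symmetric] field_simps del: ennreal_plus)
    also have "\<dots> = enn_powr A \<theta> * enn_powr B (1-\<theta>)"
      using 3 by (simp add: C_def ennreal_mult)
    finally show ?thesis unfolding A_def B_def .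
  qed
qed

lemma nn_integral_Holder3:
  fixes u v w :: "'b \<Rightarrow> real"
  assumes [measurable]: "u \<in> borel_measurable M" "v \<in> borel_measurable M" "w \<in> borel_measurable M"
    and nn: "\<And>x. 0 \<le> u x" "\<And>x. 0 \<le> v x" "\<And>x. 0 \<le> w x"
    and exps: "0 < \<alpha>" "0 < \<beta>" "0 < \<gamma>" "\<alpha> + \<beta> + \<gamma> = 1"
  shows "(\<integral>\<^sup>+x. ennreal (u x powr \<alpha> * v x powr \<beta> * w x powr \<gamma>) \<partial>M)
     \<le> enn_powr (\<integral>\<^sup>+x. u x \<partial>M) \<alpha> * enn_powr (\<integral>\<^sup>+x. v x \<partial>M) \<beta> * enn_powr (\<integral>\<^sup>+x. w x \<partial>M) \<gamma>"
proof -
  define \<mu> where "\<mu> = \<beta> / (1 - \<alpha>)"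
  have \<alpha>: "1 - \<alpha> = \<beta> + \<gamma>" using exps by simp
  have \<mu>: "0 < \<mu>" "\<mu> < 1" "\<mu> * (1 - \<alpha>) = \<beta>"
    unfolding \<mu>_def \<alpha> using exps by auto
  then have "(1 - \<mu>) * (1 - \<alpha>) = \<gamma>" by (simp add: left_diff_distrib \<alpha>)
  note \<mu> = \<mu> this
  define vw where "vw x = v x powr \<mu> * w x powr (1 - \<mu>)" for x
  have [measurable]: "vw \<in> borel_measurable M" unfolding vw_def[abs_def] by measurable
  have pt: "u x powr \<alpha> * v x powr \<beta> * w x powr \<gamma> = u x powr \<alpha> * vw x powr (1 - \<alpha>)" for x
    using nn[of x] \<mu> by (simp add: vw_def powr_mult powr_powr mult.assoc)
  have "(\<integral>\<^sup>+x. ennreal (u x powr \<alpha> * v x powr \<beta> * w x powr \<gamma>) \<partial>M)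
      = (\<integral>\<^sup>+x. ennreal (u x powr \<alpha> * vw x powr (1 - \<alpha>)) \<partial>M)"
    by (simp only: pt)
  also have "\<dots> \<le> enn_powr (\<integral>\<^sup>+x. u x \<partial>M) \<alpha> * enn_powr (\<integral>\<^sup>+x. vw x \<partial>M) (1 - \<alpha>)"
    using nn exps \<alpha> by (intro nn_integral_Holder) (auto simp: vw_def)
  also have "\<dots> \<le> enn_powr (\<integral>\<^sup>+x. u x \<partial>M) \<alpha>
      * enn_powr (enn_powr (\<integral>\<^sup>+x. v x \<partial>M) \<mu> * enn_powr (\<integral>\<^sup>+x. w x \<partial>M) (1 - \<mu>)) (1 - \<alpha>)"
    unfolding vw_def using nn \<mu> exps \<alpha>
    by (intro mult_left_mono enn_powr_mono nn_integral_Holder) auto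
  also have "\<dots> = enn_powr (\<integral>\<^sup>+x. u x \<partial>M) \<alpha> * enn_powr (\<integral>\<^sup>+x. v x \<partial>M) \<beta> * enn_powr (\<integral>\<^sup>+x. w x \<partial>M) \<gamma>"
    using \<mu> exps \<alpha> by (simp add: enn_powr_mult enn_powr_powr mult.assoc)
  finally show ?thesis .
qed

lemma enn_powr_nn_integral_mult_le:
  fixes k r :: "'b \<Rightarrow> real"
  assumes [measurable]: "k \<in> borel_measurable M" "r \<in> borel_measurable M"
    and nk: "\<And>y. 0 \<le> k y" and nr: "\<And>y. 0 \<le> r y" and q: "1 < q"
  shows "enn_powr (\<integral>\<^sup>+y. ennreal (k y * r y) \<partial>M) q
    \<le> (\<integral>\<^sup>+y. ennreal (k y powr q * r y) \<partial>M) * enn_powr (\<integral>\<^sup>+y. ennreal (r y) \<partial>M) (q - 1)"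
proof -
  have "k y * r y = (k y powr q * r y) powr (1/q) * r y powr (1 - 1/q)" for y
    using nk[of y] nr[of y] q by (simp add: powr_mult powr_powr mult.assoc powr_add[symmetric])
  then have "(\<integral>\<^sup>+y. ennreal (k y * r y) \<partial>M)
      \<le> enn_powr (\<integral>\<^sup>+y. ennreal (k y powr q * r y) \<partial>M) (1/q) * enn_powr (\<integral>\<^sup>+y. ennreal (r y) \<partial>M) (1 - 1/q)"
    using nk nr q by (simp only:) (intro nn_integral_Holder; simp)
  then have "enn_powr (\<integral>\<^sup>+y. ennreal (k y * r y) \<partial>M) q
      \<le> enn_powr (enn_powr (\<integral>\<^sup>+y. ennreal (k y powr q * r y) \<partial>M) (1/q) * enn_powr (\<integral>\<^sup>+y. ennreal (r y) \<partial>M) (1 - 1/q)) q"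
    using q by (intro enn_powr_mono) auto
  also have "\<dots> = (\<integral>\<^sup>+y. ennreal (k y powr q * r y) \<partial>M) * enn_powr (\<integral>\<^sup>+y. ennreal (r y) \<partial>M) (q - 1)"
    using q by (simp add: enn_powr_mult enn_powr_powr algebra_simps)
  finally show ?thesis .
qed

text \<open>The pointwise step of Young's convolution inequality: the exponents satisfy
  \<open>1/q + (1/t - 1/q) + (1/m\<^sub>1 - 1/q) = 1\<close>.\<close>

lemma enn_powr_nn_integral_mult_le_Young:
  fixes k r :: "'b \<Rightarrow> real"
  assumes [measurable]: "k \<in> borel_measurable M" "r \<in> borel_measurable M"
    and nk: "\<And>y. 0 \<le> k y" and nr: "\<And>y. 0 \<le> r y"
    and t: "1 < t" "t < q" and m1: "1 < m1" "m1 < q" and rel: "1/t + 1/m1 = 1 + 1/q"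
  shows "enn_powr (\<integral>\<^sup>+y. ennreal (k y * r y) \<partial>M) q
    \<le> (\<integral>\<^sup>+y. ennreal (k y powr t * r y powr m1) \<partial>M)
       * enn_powr (\<integral>\<^sup>+y. ennreal (k y powr t) \<partial>M) (q/t - 1)
       * enn_powr (\<integral>\<^sup>+y. ennreal (r y powr m1) \<partial>M) (q/m1 - 1)"
proof -
  define \<gamma> where "\<gamma> = 1/t - 1/q"
  define \<delta> where "\<delta> = 1/m1 - 1/q"
  have q: "1 < q" using t by simp
  have exps: "0 < 1/q" "0 < \<gamma>" "0 < \<delta>" "1/q + \<gamma> + \<delta> = 1"
    using q t m1 rel by (auto simp: \<gamma>_def \<delta>_def frac_less2)
  have "k y * r y = (k y powr t * r y powr m1) powr (1/q) * (k y powr t) powr \<gamma> * (r y powr m1) powr \<delta>" for y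
  proof -
    have "t/q + \<gamma> * t = 1" "m1/q + \<delta> * m1 = 1"
      using t m1 by (simp_all add: \<gamma>_def \<delta>_def field_simps)
    moreover have "(k y powr t * r y powr m1) powr (1/q) * (k y powr t) powr \<gamma> * (r y powr m1) powr \<delta>
        = k y powr (t/q + \<gamma> * t) * r y powr (m1/q + \<delta> * m1)"
      by (simp add: powr_mult powr_powr powr_add mult_ac)
    ultimately show ?thesis using nk[of y] nr[of y] by simp
  qed
  then have "(\<integral>\<^sup>+y. ennreal (k y * r y) \<partial>M)
      \<le> enn_powr (\<integral>\<^sup>+y. ennreal (k y powr t * r y powr m1) \<partial>M) (1/q)
        * enn_powr (\<integral>\<^sup>+y. ennreal (k y powr t) \<partial>M) \<gamma> * enn_powr (\<integral>\<^sup>+y. ennreal (r y powr m1) \<partial>M) \<delta>"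
    using exps by (simp only:) (intro nn_integral_Holder3; simp)
  then have "enn_powr (\<integral>\<^sup>+y. ennreal (k y * r y) \<partial>M) q
      \<le> enn_powr (enn_powr (\<integral>\<^sup>+y. ennreal (k y powr t * r y powr m1) \<partial>M) (1/q)
        * enn_powr (\<integral>\<^sup>+y. ennreal (k y powr t) \<partial>M) \<gamma> * enn_powr (\<integral>\<^sup>+y. ennreal (r y powr m1) \<partial>M) \<delta>) q"
    using q by (intro enn_powr_mono) auto
  also have "\<dots> = (\<integral>\<^sup>+y. ennreal (k y powr t * r y powr m1) \<partial>M)
       * enn_powr (\<integral>\<^sup>+y. ennreal (k y powr t) \<partial>M) (\<gamma> * q)
       * enn_powr (\<integral>\<^sup>+y. ennreal (r y powr m1) \<partial>M) (\<delta> * q)"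
    using q exps by (simp add: enn_powr_mult enn_powr_powr)
  finally show ?thesis
    using q by (simp add: \<gamma>_def \<delta>_def left_diff_distrib)
qed

lemma nn_integral_lborel_affine:
  fixes f :: "'a::euclidean_space \<Rightarrow> ennreal"
  assumes [measurable]: "f \<in> borel_measurable borel" and c: "c \<noteq> 0"
  shows "(\<integral>\<^sup>+x. f x \<partial>lborel) = ennreal (\<bar>c\<bar> ^ DIM('a)) * (\<integral>\<^sup>+x. f (t + c *\<^sub>R x) \<partial>lborel)"
  by (subst lborel_affine[OF c, of t])
     (simp add: nn_integral_density nn_integral_distr nn_integral_cmult)

lemma nn_integral_lborel_translate:
  fixes f :: "'a::euclidean_space \<Rightarrow> ennreal"
  assumes [measurable]: "f \<in> borel_measurable borel"
  shows "(\<integral>\<^sup>+x. f (x + t) \<partial>lborel) = (\<integral>\<^sup>+x. f x \<partial>lborel)"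
  using nn_integral_lborel_affine[OF assms, of 1 t] by (simp add: add.commute)

lemma lborel_integrable_affine:
  fixes f :: "'a::euclidean_space \<Rightarrow> 'b :: {banach, second_countable_topology}"
  assumes f: "integrable lborel f" and c: "c \<noteq> 0"
  shows "integrable lborel (\<lambda>x. f (t + c *\<^sub>R x))"
proof -
  have [measurable]: "f \<in> borel_measurable borel" using f by auto
  show ?thesis
    using f unfolding integrable_iff_bounded
    by (subst (asm) nn_integral_lborel_affine[where c=c and t=t]) (auto simp: c ennreal_mult_less_top)
qed

lemma lborel_integrable_affine_iff:
  fixes f :: "'a::euclidean_space \<Rightarrow> 'b :: {banach, second_countable_topology}"
  assumes c: "c \<noteq> 0"
  shows "integrable lborel (\<lambda>x. f (t + c *\<^sub>R x)) \<longleftrightarrow> integrable lborel f"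
proof
  assume "integrable lborel (\<lambda>x. f (t + c *\<^sub>R x))"
  from lborel_integrable_affine[OF this, of "1/c" "- t /\<^sub>R c"] c
  show "integrable lborel f" by (simp add: algebra_simps)
qed (rule lborel_integrable_affine[OF _ c])

lemma lborel_integral_affine:
  fixes f :: "'a::euclidean_space \<Rightarrow> 'b :: {banach, second_countable_topology}"
  assumes c: "c \<noteq> 0"
  shows "(\<integral>x. f x \<partial>lborel) = (\<bar>c\<bar> ^ DIM('a)) *\<^sub>R (\<integral>x. f (t + c *\<^sub>R x) \<partial>lborel)"
proof cases
  assume f: "integrable lborel f"
  then have [measurable]: "f \<in> borel_measurable borel" by auto
  show ?thesis
    using c f lborel_integrable_affine[OF f c, of t]
    by (subst lborel_affine[OF c, of t]) (simp add: integral_density integral_distr)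
next
  assume "\<not> integrable lborel f" with c show ?thesis
    by (simp add: lborel_integrable_affine_iff not_integrable_integral_eq)
qed

lemma nn_integral_lborel_convolution:
  fixes G H :: "'a::euclidean_space \<Rightarrow> ennreal"
  assumes [measurable]: "G \<in> borel_measurable borel" "H \<in> borel_measurable borel"
  shows "(\<integral>\<^sup>+x. (\<integral>\<^sup>+y. G (x - y) * H y \<partial>lborel) \<partial>lborel) = (\<integral>\<^sup>+x. G x \<partial>lborel) * (\<integral>\<^sup>+y. H y \<partial>lborel)"
proof -
  have "(\<integral>\<^sup>+x. (\<integral>\<^sup>+y. G (x - y) * H y \<partial>lborel) \<partial>lborel) = (\<integral>\<^sup>+y. (\<integral>\<^sup>+x. G (x - y) * H y \<partial>lborel) \<partial>lborel)"
    by (rule lborel_pair.Fubini'[symmetric]) measurable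
  also have "\<dots> = (\<integral>\<^sup>+y. (\<integral>\<^sup>+x. G (x - y) \<partial>lborel) * H y \<partial>lborel)"
    by (simp add: nn_integral_multc)
  also have "\<dots> = (\<integral>\<^sup>+y. (\<integral>\<^sup>+x. G x \<partial>lborel) * H y \<partial>lborel)"
  proof -
    have "(\<integral>\<^sup>+x. G (x - y) \<partial>lborel) = (\<integral>\<^sup>+x. G x \<partial>lborel)" for y
      using nn_integral_lborel_translate[OF assms(1), of "-y"] by simp
    then show ?thesis by simp
  qed
  also have "\<dots> = (\<integral>\<^sup>+x. G x \<partial>lborel) * (\<integral>\<^sup>+y. H y \<partial>lborel)"
    by (simp add: nn_integral_cmult)
  finally show ?thesis .
qed

lemma nn_integral_lborel_dilate:
  fixes g :: "'a::euclidean_space \<Rightarrow> ennreal"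
  assumes [measurable]: "g \<in> borel_measurable borel" and c: "0 < c"
  shows "(\<integral>\<^sup>+x. g (c *\<^sub>R x) \<partial>lborel) = ennreal (c powr (- real DIM('a))) * (\<integral>\<^sup>+x. g x \<partial>lborel)"
proof -
  have "(\<integral>\<^sup>+x. g x \<partial>lborel) = ennreal (\<bar>c\<bar> ^ DIM('a)) * (\<integral>\<^sup>+x. g (0 + c *\<^sub>R x) \<partial>lborel)"
    using c by (intro nn_integral_lborel_affine) auto
  then have "ennreal (c powr (- real DIM('a))) * (\<integral>\<^sup>+x. g x \<partial>lborel)
     = ennreal (c powr (- real DIM('a))) * ennreal (c ^ DIM('a)) * (\<integral>\<^sup>+x. g (c *\<^sub>R x) \<partial>lborel)"
    using c by (simp add: mult.assoc)
  also have "ennreal (c powr (- real DIM('a))) * ennreal (c ^ DIM('a)) = 1"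
    using c by (simp add: ennreal_mult[symmetric] powr_realpow[symmetric] powr_add[symmetric])
  finally show ?thesis by simp
qed

lemma nn_integral_lborel_reflect:
  fixes g :: "'a::euclidean_space \<Rightarrow> ennreal"
  assumes [measurable]: "g \<in> borel_measurable borel"
  shows "(\<integral>\<^sup>+y. g (x - y) \<partial>lborel) = (\<integral>\<^sup>+y. g y \<partial>lborel)"
  using nn_integral_lborel_affine[OF assms, of "-1" x] by simp

lemma lborel_integral_dilate:
  fixes f :: "'a::euclidean_space \<Rightarrow> 'b::{banach, second_countable_topology}"
  assumes c: "0 < c"
  shows "(\<integral>x. f (c *\<^sub>R x) \<partial>lborel) = (c powr (- real DIM('a))) *\<^sub>R (\<integral>x. f x \<partial>lborel)"
proof -
  have "(\<integral>x. f x \<partial>lborel) = (c ^ DIM('a)) *\<^sub>R (\<integral>x. f (0 + c *\<^sub>R x) \<partial>lborel)"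
    using lborel_integral_affine[of c f 0] c by simp
  then have "(c powr (- real DIM('a))) *\<^sub>R (\<integral>x. f x \<partial>lborel) = (c powr (- real DIM('a)) * c ^ DIM('a)) *\<^sub>R (\<integral>x. f (c *\<^sub>R x) \<partial>lborel)"
    by simp
  also have "c powr (- real DIM('a)) * c ^ DIM('a) = 1"
    using c by (simp add: powr_realpow[symmetric] powr_add[symmetric])
  finally show ?thesis by simp
qed

lemma lborel_integrable_dilate:
  fixes f :: "'a::euclidean_space \<Rightarrow> 'b::{banach, second_countable_topology}"
  assumes "integrable lborel f" "0 < c"
  shows "integrable lborel (\<lambda>x. f (c *\<^sub>R x))"
  using lborel_integrable_affine[OF assms(1), of c 0] assms(2) by simp

lemma lborel_integral_translate:
  fixes f :: "'a::euclidean_space \<Rightarrow> real"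
  shows "(\<integral>y. f (y + t) \<partial>lborel) = (\<integral>y. f y \<partial>lborel)"
  using lborel_integral_affine[of 1 f t] by (simp add: add.commute)


lemma cball_borel[measurable]: "cball (c::'a::euclidean_space) r \<in> sets borel"
  by simp

definition shell :: "real \<Rightarrow> real \<Rightarrow> 'a::euclidean_space set" where
  "shell lo hi = {x. lo < norm x \<and> norm x \<le> hi}"

lemma shell_borel[measurable]: "shell lo hi \<in> sets borel"
  unfolding shell_def by measurable

lemma shell_dilate:
  fixes e :: real
  assumes c: "0 < c"
  shows "(\<integral>\<^sup>+x. ennreal (norm x powr e * indicator (shell (c*lo) (c*hi)) x) \<partial>(lborel::'a::euclidean_space measure))
    = ennreal (c ^ DIM('a) * c powr e) * (\<integral>\<^sup>+x. ennreal (norm x powr e * indicator (shell lo hi) x) \<partial>(lborel::'a measure))"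
proof -
  have "(\<integral>\<^sup>+x. ennreal (norm x powr e * indicator (shell (c*lo) (c*hi)) x) \<partial>(lborel::'a measure))
     = ennreal (\<bar>c\<bar> ^ DIM('a)) * (\<integral>\<^sup>+x. ennreal (norm (0 + c *\<^sub>R x) powr e * indicator (shell (c*lo) (c*hi)) (0 + c *\<^sub>R x)) \<partial>(lborel::'a measure))"
    using c by (intro nn_integral_lborel_affine) auto
  also have "(\<lambda>x::'a. ennreal (norm (0 + c *\<^sub>R x) powr e * indicator (shell (c*lo) (c*hi)) (0 + c *\<^sub>R x)))
      = (\<lambda>x. ennreal (c powr e) * ennreal (norm x powr e * indicator (shell lo hi) x))"
  proof
    fix x :: 'a
    have "indicator (shell (c*lo) (c*hi)) (c *\<^sub>R x) = (indicator (shell lo hi) x :: real)"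
      using c by (simp add: shell_def indicator_def)
    then show "ennreal (norm (0 + c *\<^sub>R x) powr e * indicator (shell (c*lo) (c*hi)) (0 + c *\<^sub>R x))
      = ennreal (c powr e) * ennreal (norm x powr e * indicator (shell lo hi) x)"
      using c by (simp add: powr_mult ennreal_mult[symmetric] mult.assoc)
  qed
  finally show ?thesis using c
    by (simp add: nn_integral_cmult ennreal_mult mult.assoc)
qed

lemma nn_integral_norm_powr_shell_finite:
  assumes "0 < lo"
  shows "(\<integral>\<^sup>+x. ennreal (norm x powr e * indicator (shell lo hi) x) \<partial>(lborel::'a::euclidean_space measure)) < top"
proof -
  have "(\<integral>\<^sup>+x. ennreal (norm x powr e * indicator (shell lo hi) x) \<partial>(lborel::'a measure))
      \<le> (\<integral>\<^sup>+x. ennreal (lo powr e + hi powr e) * indicator (cball 0 hi) x \<partial>(lborel::'a measure))"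
  proof (rule nn_integral_mono)
    fix x :: 'a
    show "ennreal (norm x powr e * indicator (shell lo hi) x) \<le> ennreal (lo powr e + hi powr e) * indicator (cball 0 hi) x"
    proof (cases "x \<in> shell lo hi")
      case True
      then have x: "lo < norm x" "norm x \<le> hi" by (auto simp: shell_def)
      have "norm x powr e \<le> lo powr e + hi powr e"
      proof (cases "0 \<le> e")
        case True
        then have "norm x powr e \<le> hi powr e" using x assms by (intro powr_mono2) auto
        then show ?thesis using powr_ge_zero[of lo e] by linarith
      next
        case False
        then have "norm x powr e \<le> lo powr e" using x assms by (intro powr_mono2') auto
        then show ?thesis using powr_ge_zero[of hi e] by linarith
      qed
      then show ?thesis using True x
        by (simp add: indicator_def ennreal_plus[symmetric] del: ennreal_plus)
    qed auto
  qed
  also have "\<dots> = ennreal (lo powr e + hi powr e) * emeasure lborel (cball (0::'a) hi)"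
    by (simp add: nn_integral_cmult_indicator)
  also have "\<dots> < top"
    using emeasure_lborel_cball_finite[of "0::'a" hi] by (simp add: ennreal_mult_less_top)
  finally show ?thesis .
qed


lemma exists_power_bracket:
  fixes c y :: real
  assumes c: "0 < c" "c < 1" and y: "0 < y" "y \<le> 1"
  shows "\<exists>n. c ^ Suc n < y \<and> y \<le> c ^ n"
proof -
  obtain k where k: "c ^ k < y" using real_arch_pow_inv[OF y(1) c(2)] by blast
  define n where "n = (LEAST n. c ^ Suc n < y)"
  have "c ^ Suc k \<le> c ^ k" using c by (intro power_decreasing) auto
  then have "c ^ Suc k < y" using k by linarith
  then have n1: "c ^ Suc n < y" unfolding n_def by (rule LeastI)
  have "y \<le> c ^ n"
  proof (cases n)
    case (Suc j)
    then have "\<not> c ^ Suc j < y" unfolding n_def using not_less_Least[of j "\<lambda>n. c ^ Suc n < y"] Suc n_def by auto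
    then show ?thesis using Suc by simp
  qed (use y in simp)
  with n1 show ?thesis by blast
qed

text \<open>Decomposing \<open>A\<close> into dilated copies of one shell turns the integral into a geometric series
  with ratio \<open>c\<^bsup>N-a\<^esup>\<close>.\<close>

lemma nn_integral_norm_powr_finite:
  fixes A :: "'a::euclidean_space set"
  assumes c: "0 < c" and lo: "0 < lo" and ratio: "c powr (real DIM('a) - a) < 1"
    and cover: "\<And>x. x \<in> A \<Longrightarrow> x \<noteq> 0 \<Longrightarrow> \<exists>n. x \<in> shell (c ^ n * lo) (c ^ n * hi)"
  shows "(\<integral>\<^sup>+x. ennreal (norm x powr (-a) * indicator A x) \<partial>lborel) < top"
proof -
  define J where "J = (\<integral>\<^sup>+x. ennreal (norm x powr (-a) * indicator (shell lo hi) x) \<partial>(lborel::'a measure))"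
  define r where "r = c powr (real DIM('a) - a)"
  define S where "S n = (shell (c ^ n * lo) (c ^ n * hi) :: 'a set)" for n
  have r: "0 < r" "r < 1" using c ratio by (auto simp: r_def)
  have Sn: "(\<integral>\<^sup>+x. ennreal (norm x powr (-a) * indicator (S n) x) \<partial>lborel) = ennreal (r ^ n) * J" for n
  proof -
    have "(c ^ n) ^ DIM('a) * (c ^ n) powr (-a) = r ^ n"
      using c by (simp add: r_def powr_realpow[symmetric] powr_powr powr_add[symmetric] algebra_simps)
    then show ?thesis
      unfolding S_def J_def using shell_dilate[where c="c ^ n" and lo=lo and hi=hi and e="-a", where 'a='a] c by simp
  qed
  have "ennreal (norm x powr (-a) * indicator A x) \<le> (\<Sum>n. ennreal (norm x powr (-a) * indicator (S n) x))"
    for x :: 'a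
  proof (cases "x \<in> A \<and> x \<noteq> 0")
    case True
    then obtain n where "x \<in> S n" using cover unfolding S_def by blast
    then have "ennreal (norm x powr (-a) * indicator A x) = ennreal (norm x powr (-a) * indicator (S n) x)"
      using True by simp
    also have "\<dots> \<le> (\<Sum>n. ennreal (norm x powr (-a) * indicator (S n) x))"
      using sum_le_suminf[OF summableI, of "{n}"] by simp
    finally show ?thesis .
  qed (auto simp: indicator_def)
  then have "(\<integral>\<^sup>+x. ennreal (norm x powr (-a) * indicator A x) \<partial>lborel)
      \<le> (\<integral>\<^sup>+x. (\<Sum>n. ennreal (norm x powr (-a) * indicator (S n) x)) \<partial>lborel)"
    by (rule nn_integral_mono)
  also have "\<dots> = (\<Sum>n. ennreal (r ^ n) * J)"
    unfolding Sn[symmetric] S_def by (rule nn_integral_suminf) measurable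
  also have "\<dots> = (\<Sum>n. ennreal (r ^ n)) * J"
    by (rule ennreal_suminf_multc)
  also have "(\<Sum>n. ennreal (r ^ n)) = ennreal (1 / (1 - r))"
    using r by (intro suminf_ennreal_eq geometric_sums) auto
  also have "ennreal (1 / (1 - r)) * J < top"
    using nn_integral_norm_powr_shell_finite[OF lo, of "-a" hi, where 'a='a] unfolding J_def by (simp add: ennreal_mult_less_top)
  finally show ?thesis .
qed

lemma nn_integral_norm_powr_ball_finite:
  assumes "a < real DIM('a)"
  shows "(\<integral>\<^sup>+x. ennreal (norm x powr (-a) * indicator {x. norm x \<le> 1} x) \<partial>(lborel::'a::euclidean_space measure)) < top"
proof (rule nn_integral_norm_powr_finite[where c="1/2" and lo="1/2" and hi=1])
  show "(1/2::real) powr (real DIM('a) - a) < 1"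
    using assms powr_less_mono'[of "1/2::real" 0 "real DIM('a) - a"] by simp
  fix x :: 'a assume "x \<in> {x. norm x \<le> 1}" "x \<noteq> 0"
  then obtain n where "(1/2) ^ Suc n < norm x" "norm x \<le> (1/2) ^ n"
    using exists_power_bracket[of "1/2" "norm x"] by auto
  then show "\<exists>n. x \<in> shell ((1/2) ^ n * (1/2)) ((1/2) ^ n * 1)"
    by (auto simp: shell_def mult.commute)
qed auto

lemma nn_integral_norm_powr_exterior_finite:
  assumes "real DIM('a) < b"
  shows "(\<integral>\<^sup>+x. ennreal (norm x powr (-b) * indicator {x. 1 < norm x} x) \<partial>(lborel::'a::euclidean_space measure)) < top"
proof (rule nn_integral_norm_powr_finite[where c=2 and lo="1/2" and hi=2])
  show "(2::real) powr (real DIM('a) - b) < 1"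
    using assms by (simp add: powr_less_one)
  fix x :: 'a assume "x \<in> {x. 1 < norm x}"
  then have "1 < norm x" "x \<noteq> 0" by auto
  then obtain n where n: "(1/2) ^ Suc n < 1 / norm x" "1 / norm x \<le> (1/2) ^ n"
    using exists_power_bracket[of "1/2" "1 / norm x"] by auto
  have "inverse (norm x) \<le> inverse (2 ^ n)" "inverse (2 ^ Suc n) < inverse (norm x)"
    using n by (simp_all only: power_one_over inverse_eq_divide)
  then have "(2::real) ^ n \<le> norm x" "norm x < 2 ^ Suc n"
    using \<open>1 < norm x\<close> inverse_le_imp_le inverse_less_imp_less zero_less_power
    by (metis less_trans zero_less_one, metis zero_less_numeral)
  then show "\<exists>n. x \<in> shell (2 ^ n * (1/2)) (2 ^ n * 2)"
    by (intro exI[of _ n]) (auto simp: shell_def)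
qed auto

lemma nn_integral_convolution_Young:
  fixes G \<rho> :: "'a::euclidean_space \<Rightarrow> real"
  assumes [measurable]: "G \<in> borel_measurable borel" "\<rho> \<in> borel_measurable borel"
    and nG: "\<And>y. 0 \<le> G y" and nr: "\<And>y. 0 \<le> \<rho> y"
    and t: "1 < t" "t < q" and m1: "1 < m1" "m1 < q" and rel: "1/t + 1/m1 = 1 + 1/q"
  shows "(\<integral>\<^sup>+x. enn_powr (\<integral>\<^sup>+y. ennreal (G (x - y) * \<rho> y) \<partial>lborel) q \<partial>lborel)
    \<le> enn_powr (\<integral>\<^sup>+y. ennreal (G y powr t) \<partial>lborel) (q/t) * enn_powr (\<integral>\<^sup>+y. ennreal (\<rho> y powr m1) \<partial>lborel) (q/m1)"
proof -
  define KT where "KT = (\<integral>\<^sup>+y. ennreal (G y powr t) \<partial>(lborel::'a measure))"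
  define RM where "RM = (\<integral>\<^sup>+y. ennreal (\<rho> y powr m1) \<partial>(lborel::'a measure))"
  have refl: "(\<integral>\<^sup>+y. ennreal (G (x - y) powr t) \<partial>lborel) = KT" for x
    unfolding KT_def by (rule nn_integral_lborel_reflect[of "\<lambda>y. ennreal (G y powr t)"]) measurable
  have pt: "enn_powr (\<integral>\<^sup>+y. ennreal (G (x - y) * \<rho> y) \<partial>lborel) q
     \<le> (\<integral>\<^sup>+y. ennreal (G (x - y) powr t) * ennreal (\<rho> y powr m1) \<partial>lborel) * (enn_powr KT (q/t - 1) * enn_powr RM (q/m1 - 1))" for x
  proof -
    have "enn_powr (\<integral>\<^sup>+y. ennreal (G (x - y) * \<rho> y) \<partial>lborel) q
      \<le> (\<integral>\<^sup>+y. ennreal (G (x - y) powr t * \<rho> y powr m1) \<partial>lborel)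
       * enn_powr (\<integral>\<^sup>+y. ennreal (G (x - y) powr t) \<partial>lborel) (q/t - 1)
       * enn_powr (\<integral>\<^sup>+y. ennreal (\<rho> y powr m1) \<partial>lborel) (q/m1 - 1)"
      by (rule enn_powr_nn_integral_mult_le_Young[where k="\<lambda>y. G (x - y)" and r=\<rho>]) (use assms in auto)
    then show ?thesis unfolding refl RM_def by (simp add: ennreal_mult mult.assoc)
  qed
  have "(\<integral>\<^sup>+x. enn_powr (\<integral>\<^sup>+y. ennreal (G (x - y) * \<rho> y) \<partial>lborel) q \<partial>lborel)
     \<le> (\<integral>\<^sup>+x. (\<integral>\<^sup>+y. ennreal (G (x - y) powr t) * ennreal (\<rho> y powr m1) \<partial>lborel) * (enn_powr KT (q/t - 1) * enn_powr RM (q/m1 - 1)) \<partial>lborel)"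
    by (rule nn_integral_mono) (rule pt)
  also have "\<dots> = (\<integral>\<^sup>+x. (\<integral>\<^sup>+y. ennreal (G (x - y) powr t) * ennreal (\<rho> y powr m1) \<partial>lborel) \<partial>lborel) * (enn_powr KT (q/t - 1) * enn_powr RM (q/m1 - 1))"
    by (rule nn_integral_multc) measurable
  also have "(\<integral>\<^sup>+x. (\<integral>\<^sup>+y. ennreal (G (x - y) powr t) * ennreal (\<rho> y powr m1) \<partial>lborel) \<partial>lborel) = KT * RM"
    unfolding KT_def RM_def
    by (rule nn_integral_lborel_convolution[of "\<lambda>y. ennreal (G y powr t)" "\<lambda>y. ennreal (\<rho> y powr m1)"]) measurable
  also have "KT * RM * (enn_powr KT (q/t - 1) * enn_powr RM (q/m1 - 1))
      = (enn_powr KT (q/t - 1) * KT) * (enn_powr RM (q/m1 - 1) * RM)"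
    by (simp add: mult_ac)
  also have "\<dots> = enn_powr KT (q/t) * enn_powr RM (q/m1)"
    using t m1 by (simp add: enn_powr_mult_self)
  finally show ?thesis unfolding KT_def RM_def .
qed

lemma nn_integral_convolution_L1:
  fixes G \<rho> :: "'a::euclidean_space \<Rightarrow> real"
  assumes [measurable]: "G \<in> borel_measurable borel" "\<rho> \<in> borel_measurable borel"
    and nG: "\<And>y. 0 \<le> G y" and nr: "\<And>y. 0 \<le> \<rho> y" and q: "1 < q"
  shows "(\<integral>\<^sup>+x. enn_powr (\<integral>\<^sup>+y. ennreal (G (x - y) * \<rho> y) \<partial>lborel) q \<partial>lborel)
    \<le> (\<integral>\<^sup>+y. ennreal (G y powr q) \<partial>lborel) * enn_powr (\<integral>\<^sup>+y. ennreal (\<rho> y) \<partial>lborel) q"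
proof -
  define KQ where "KQ = (\<integral>\<^sup>+y. ennreal (G y powr q) \<partial>(lborel::'a measure))"
  define R1 where "R1 = (\<integral>\<^sup>+y. ennreal (\<rho> y) \<partial>(lborel::'a measure))"
  have pt: "enn_powr (\<integral>\<^sup>+y. ennreal (G (x - y) * \<rho> y) \<partial>lborel) q
     \<le> (\<integral>\<^sup>+y. ennreal (G (x - y) powr q) * ennreal (\<rho> y) \<partial>lborel) * enn_powr R1 (q - 1)" for x
  proof -
    have "enn_powr (\<integral>\<^sup>+y. ennreal (G (x - y) * \<rho> y) \<partial>lborel) q
      \<le> (\<integral>\<^sup>+y. ennreal (G (x - y) powr q * \<rho> y) \<partial>lborel) * enn_powr (\<integral>\<^sup>+y. ennreal (\<rho> y) \<partial>lborel) (q - 1)"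
      by (rule enn_powr_nn_integral_mult_le[where k="\<lambda>y. G (x - y)" and r=\<rho>]) (use assms in auto)
    then show ?thesis unfolding R1_def by (simp add: ennreal_mult')
  qed
  have "(\<integral>\<^sup>+x. enn_powr (\<integral>\<^sup>+y. ennreal (G (x - y) * \<rho> y) \<partial>lborel) q \<partial>lborel)
     \<le> (\<integral>\<^sup>+x. (\<integral>\<^sup>+y. ennreal (G (x - y) powr q) * ennreal (\<rho> y) \<partial>lborel) * enn_powr R1 (q - 1) \<partial>lborel)"
    by (rule nn_integral_mono) (rule pt)
  also have "\<dots> = (\<integral>\<^sup>+x. (\<integral>\<^sup>+y. ennreal (G (x - y) powr q) * ennreal (\<rho> y) \<partial>lborel) \<partial>lborel) * enn_powr R1 (q - 1)"
    by (rule nn_integral_multc) measurable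
  also have "(\<integral>\<^sup>+x. (\<integral>\<^sup>+y. ennreal (G (x - y) powr q) * ennreal (\<rho> y) \<partial>lborel) \<partial>lborel) = KQ * R1"
    unfolding KQ_def R1_def
    by (rule nn_integral_lborel_convolution[of "\<lambda>y. ennreal (G y powr q)" "\<lambda>y. ennreal (\<rho> y)"]) measurable
  also have "KQ * R1 * enn_powr R1 (q - 1) = KQ * (enn_powr R1 (q - 1) * R1)"
    by (simp add: mult_ac)
  also have "\<dots> = KQ * enn_powr R1 q"
    using q by (simp add: enn_powr_mult_self)
  finally show ?thesis unfolding KQ_def R1_def .
qed

section \<open>The Riesz kernel\<close>

lemma riesz_const_pos:
  assumes "0 < s" "s < real N" shows "0 < riesz_const N (s/2)"
  using assms unfolding riesz_const_def by (auto intro!: mult_pos_pos divide_pos_pos)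

lemma riesz_kernel_nonneg:
  assumes "0 < s" "s < real DIM('a)" shows "0 \<le> riesz_kernel s (x::'a::euclidean_space)"
  using riesz_const_pos[OF assms] by (simp add: riesz_kernel_def)

lemma riesz_kernel_pos:
  assumes "0 < s" "s < real DIM('a)" "x \<noteq> 0" shows "0 < riesz_kernel s (x::'a::euclidean_space)"
  using riesz_const_pos[OF assms(1,2)] assms(3) by (simp add: riesz_kernel_def)

lemma riesz_kernel_measurable[measurable]: "riesz_kernel s \<in> borel_measurable borel"
  unfolding riesz_kernel_def by measurable

lemma riesz_kernel_dilate:
  assumes "0 < c"
  shows "riesz_kernel s (c *\<^sub>R x) = c powr (s - real DIM('a)) * riesz_kernel s (x::'a::euclidean_space)"
  using assms by (simp add: riesz_kernel_def powr_mult)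

lemma riesz_kernel_le_exterior:
  assumes "0 < s" "s < real DIM('a)" "1 < norm x"
  shows "riesz_kernel s (x::'a::euclidean_space) \<le> riesz_const DIM('a) (s/2)"
proof -
  have "norm x powr (s - real DIM('a)) \<le> 1"
    using assms powr_mono2'[of "s - real DIM('a)" 1 "norm x"] by auto
  then show ?thesis using riesz_const_pos[OF assms(1,2)]
    by (simp add: riesz_kernel_def mult_left_le)
qed

lemma riesz_kernel_powr:
  assumes "0 < s" "s < real DIM('a)" "0 < t"
  shows "riesz_kernel s (x::'a::euclidean_space) powr t
     = riesz_const DIM('a) (s/2) powr t * norm x powr (- ((real DIM('a) - s) * t))"
proof -
  have e: "(s - real DIM('a)) * t = - ((real DIM('a) - s) * t)" by (simp add: algebra_simps)
  show ?thesis using riesz_const_pos[OF assms(1,2)] assms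
    by (cases "x = 0") (simp_all add: riesz_kernel_def powr_mult powr_powr e)
qed

definition riesz_kernel_near :: "real \<Rightarrow> 'a::euclidean_space \<Rightarrow> real" where
  "riesz_kernel_near s y = riesz_kernel s y * indicator {y. norm y \<le> 1} y"

definition riesz_kernel_far :: "real \<Rightarrow> 'a::euclidean_space \<Rightarrow> real" where
  "riesz_kernel_far s y = riesz_kernel s y * indicator {y. 1 < norm y} y"

lemma riesz_kernel_near_far_measurable[measurable]:
  "riesz_kernel_near s \<in> borel_measurable borel" "riesz_kernel_far s \<in> borel_measurable borel"
  unfolding riesz_kernel_near_def[abs_def] riesz_kernel_far_def[abs_def] by measurable measurable

lemma riesz_kernel_near_far_sum:
  "riesz_kernel s (y::'a::euclidean_space) = riesz_kernel_near s y + riesz_kernel_far s y"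
  by (auto simp: riesz_kernel_near_def riesz_kernel_far_def indicator_def)

lemma riesz_kernel_near_far_nonneg:
  "0 < s \<Longrightarrow> s < real DIM('a) \<Longrightarrow> 0 \<le> riesz_kernel_near s (y::'a::euclidean_space) \<and> 0 \<le> riesz_kernel_far s y"
  using riesz_kernel_nonneg[of s y] by (auto simp: riesz_kernel_near_def riesz_kernel_far_def)

lemma riesz_kernel_near_powr:
  "0 < t \<Longrightarrow> riesz_kernel_near s (y::'a::euclidean_space) powr t = riesz_kernel s y powr t * indicator {y. norm y \<le> 1} y"
  by (auto simp: riesz_kernel_near_def indicator_def)

lemma riesz_kernel_far_powr:
  "0 < t \<Longrightarrow> riesz_kernel_far s (y::'a::euclidean_space) powr t = riesz_kernel s y powr t * indicator {y. 1 < norm y} y"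
  by (auto simp: riesz_kernel_far_def indicator_def)

lemma nn_integral_riesz_kernel_powr_indicator:
  fixes A :: "'a::euclidean_space set"
  assumes "0 < s" "s < real DIM('a)" "0 < t" and [measurable]: "A \<in> sets borel"
  shows "(\<integral>\<^sup>+x. ennreal (riesz_kernel s x powr t * indicator A x) \<partial>lborel)
    = ennreal (riesz_const DIM('a) (s/2) powr t)
      * (\<integral>\<^sup>+x. ennreal (norm x powr (- ((real DIM('a) - s) * t)) * indicator A x) \<partial>lborel)"
  using assms
  by (simp add: riesz_kernel_powr ennreal_mult[symmetric] mult.assoc nn_integral_cmult[symmetric])

lemma nn_integral_riesz_kernel_near_powr_finite:
  assumes "0 < s" "s < real DIM('a)" "0 < t" "(real DIM('a) - s) * t < real DIM('a)"
  shows "(\<integral>\<^sup>+x. ennreal (riesz_kernel_near s x powr t) \<partial>(lborel::'a::euclidean_space measure)) < top"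
  using assms nn_integral_norm_powr_ball_finite[of "(real DIM('a) - s) * t", where 'a='a]
  by (simp add: riesz_kernel_near_powr nn_integral_riesz_kernel_powr_indicator ennreal_mult_less_top)

lemma nn_integral_riesz_kernel_far_powr_finite:
  assumes "0 < s" "s < real DIM('a)" "0 < t" "real DIM('a) < (real DIM('a) - s) * t"
  shows "(\<integral>\<^sup>+x. ennreal (riesz_kernel_far s x powr t) \<partial>(lborel::'a::euclidean_space measure)) < top"
  using assms nn_integral_norm_powr_exterior_finite[of "(real DIM('a) - s) * t", where 'a='a]
  by (simp add: riesz_kernel_far_powr nn_integral_riesz_kernel_powr_indicator ennreal_mult_less_top)

lemma nn_integral_riesz_kernel_near_finite:
  assumes "0 < s" "s < real DIM('a)"
  shows "(\<integral>\<^sup>+y. ennreal (riesz_kernel_near s y) \<partial>(lborel::'a::euclidean_space measure)) < top"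
  using nn_integral_riesz_kernel_near_powr_finite[OF assms, of 1] riesz_kernel_near_far_nonneg[OF assms] assms
  by simp

section \<open>The interaction energy\<close>

definition riesz_energy :: "real \<Rightarrow> real \<Rightarrow> ('a::euclidean_space \<Rightarrow> real) \<Rightarrow> ennreal" where
  "riesz_energy s q \<rho> = (\<integral>\<^sup>+x. enn_powr (riesz_conv_nn s \<rho> x) q \<partial>lborel)"

definition mass_dilate :: "real \<Rightarrow> ('a::euclidean_space \<Rightarrow> real) \<Rightarrow> 'a \<Rightarrow> real" where
  "mass_dilate c \<rho> = (\<lambda>y. c ^ DIM('a) * \<rho> (c *\<^sub>R y))"

lemma riesz_conv_nn_measurable[measurable]:
  assumes [measurable]: "\<rho> \<in> borel_measurable borel"
  shows "riesz_conv_nn s \<rho> \<in> borel_measurable borel"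
  unfolding riesz_conv_nn_def[abs_def] by measurable

lemma riesz_conv_nn_mono:
  assumes "0 < s" "s < real DIM('a)" "\<And>y. \<rho> y \<le> \<sigma> y"
  shows "riesz_conv_nn s \<rho> x \<le> riesz_conv_nn s \<sigma> (x::'a::euclidean_space)"
  unfolding riesz_conv_nn_def
  using assms riesz_kernel_nonneg[OF assms(1,2)]
  by (intro nn_integral_mono ennreal_leI mult_left_mono) auto

lemma riesz_conv_nn_cmult:
  assumes "0 < s" "s < real DIM('a)" "0 \<le> a" and [measurable]: "\<rho> \<in> borel_measurable borel"
  shows "riesz_conv_nn s (\<lambda>y. a * \<rho> y) x = ennreal a * riesz_conv_nn s \<rho> (x::'a::euclidean_space)"
proof -
  have "(\<lambda>y. ennreal (riesz_kernel s (x - y) * (a * \<rho> y))) = (\<lambda>y. ennreal a * ennreal (riesz_kernel s (x - y) * \<rho> y))"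
    using assms by (auto simp: ennreal_mult'[symmetric] algebra_simps)
  then show ?thesis unfolding riesz_conv_nn_def
    by (simp add: nn_integral_cmult)
qed

lemma riesz_conv_nn_translate:
  assumes [measurable]: "\<rho> \<in> borel_measurable borel"
  shows "riesz_conv_nn s (\<lambda>y. \<rho> (y + t)) x = riesz_conv_nn s \<rho> (x + t :: 'a::euclidean_space)"
proof -
  have "riesz_conv_nn s \<rho> (x + t) = (\<integral>\<^sup>+y. ennreal (riesz_kernel s (x + t - (y + t)) * \<rho> (y + t)) \<partial>lborel)"
    unfolding riesz_conv_nn_def
    by (rule nn_integral_lborel_translate[symmetric, of "\<lambda>y. ennreal (riesz_kernel s (x + t - y) * \<rho> y)"]) measurable
  then show ?thesis unfolding riesz_conv_nn_def by simp
qed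

lemma riesz_conv_nn_dilate:
  assumes "0 < s" "s < real DIM('a)" "0 < c" and [measurable]: "\<rho> \<in> borel_measurable borel"
  shows "riesz_conv_nn s (mass_dilate c \<rho>) x = ennreal (c powr (real DIM('a) - s)) * riesz_conv_nn s \<rho> (c *\<^sub>R x :: 'a::euclidean_space)"
proof -
  define X where "X = (\<integral>\<^sup>+y. ennreal (riesz_kernel s (x - y) * \<rho> (c *\<^sub>R y)) \<partial>(lborel::'a measure))"
  have L: "riesz_conv_nn s (mass_dilate c \<rho>) x = ennreal (c ^ DIM('a)) * X"
  proof -
    have "(\<lambda>y. ennreal (riesz_kernel s (x - y) * mass_dilate c \<rho> y)) = (\<lambda>y. ennreal (c ^ DIM('a)) * ennreal (riesz_kernel s (x - y) * \<rho> (c *\<^sub>R y)))"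
      using assms by (auto simp: mass_dilate_def ennreal_mult'[symmetric] algebra_simps)
    then show ?thesis unfolding riesz_conv_nn_def X_def by (simp add: nn_integral_cmult)
  qed
  have "riesz_conv_nn s \<rho> (c *\<^sub>R x) = ennreal (\<bar>c\<bar> ^ DIM('a)) *
      (\<integral>\<^sup>+y. ennreal (riesz_kernel s (c *\<^sub>R x - (0 + c *\<^sub>R y)) * \<rho> (0 + c *\<^sub>R y)) \<partial>(lborel::'a measure))"
    unfolding riesz_conv_nn_def using assms
    by (intro nn_integral_lborel_affine[of "\<lambda>y. ennreal (riesz_kernel s (c *\<^sub>R x - y) * \<rho> y)"]) auto
  also have "(\<lambda>y. ennreal (riesz_kernel s (c *\<^sub>R x - (0 + c *\<^sub>R y)) * \<rho> (0 + c *\<^sub>R y)))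
     = (\<lambda>y. ennreal (c powr (s - real DIM('a))) * ennreal (riesz_kernel s (x - y) * \<rho> (c *\<^sub>R y)))"
  proof
    fix y :: 'a
    have "c *\<^sub>R x - (0 + c *\<^sub>R y) = c *\<^sub>R (x - y)" by (simp add: algebra_simps)
    then show "ennreal (riesz_kernel s (c *\<^sub>R x - (0 + c *\<^sub>R y)) * \<rho> (0 + c *\<^sub>R y))
       = ennreal (c powr (s - real DIM('a))) * ennreal (riesz_kernel s (x - y) * \<rho> (c *\<^sub>R y))"
      using assms by (simp add: riesz_kernel_dilate ennreal_mult'[symmetric] mult.assoc)
  qed
  also have "(\<integral>\<^sup>+y. ennreal (c powr (s - real DIM('a))) * ennreal (riesz_kernel s (x - y) * \<rho> (c *\<^sub>R y)) \<partial>(lborel::'a measure))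
     = ennreal (c powr (s - real DIM('a))) * X"
    unfolding X_def by (simp add: nn_integral_cmult)
  finally have R: "riesz_conv_nn s \<rho> (c *\<^sub>R x) = ennreal (c ^ DIM('a)) * (ennreal (c powr (s - real DIM('a))) * X)"
    using assms by simp
  have "ennreal (c powr (real DIM('a) - s)) * ennreal (c powr (s - real DIM('a))) = 1"
    using assms by (simp add: ennreal_mult[symmetric] powr_add[symmetric])
  then show ?thesis unfolding L R
    by (metis (no_types, lifting) mult.assoc mult.left_commute mult_1)
qed

lemma riesz_energy_mass_dilate:
  assumes "0 < s" "s < real DIM('a)" "0 < c" "0 < q" and [measurable]: "\<rho> \<in> borel_measurable borel"
  shows "riesz_energy s q (mass_dilate c \<rho> :: 'a::euclidean_space \<Rightarrow> real)
     = ennreal (c powr ((real DIM('a) - s) * q - real DIM('a))) * riesz_energy s q \<rho>"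
proof -
  have "riesz_energy s q (mass_dilate c \<rho> :: 'a \<Rightarrow> real)
      = (\<integral>\<^sup>+x. ennreal (c powr ((real DIM('a) - s) * q)) * enn_powr (riesz_conv_nn s \<rho> (c *\<^sub>R x)) q \<partial>(lborel::'a measure))"
    unfolding riesz_energy_def using assms
    by (simp add: riesz_conv_nn_dilate enn_powr_mult powr_powr)
  also have "\<dots> = ennreal (c powr ((real DIM('a) - s) * q)) * (\<integral>\<^sup>+x. enn_powr (riesz_conv_nn s \<rho> (c *\<^sub>R x)) q \<partial>(lborel::'a measure))"
    by (rule nn_integral_cmult) measurable
  also have "(\<integral>\<^sup>+x. enn_powr (riesz_conv_nn s \<rho> (c *\<^sub>R x)) q \<partial>(lborel::'a measure))
     = ennreal (c powr (- real DIM('a))) * riesz_energy s q \<rho>"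
    unfolding riesz_energy_def using nn_integral_lborel_dilate[of "\<lambda>x. enn_powr (riesz_conv_nn s \<rho> x) q" c] assms(3) by simp
  finally show ?thesis using assms
    by (simp add: mult.assoc[symmetric] ennreal_mult[symmetric] powr_add[symmetric])
qed

lemma riesz_energy_translate:
  assumes [measurable]: "\<rho> \<in> borel_measurable borel"
  shows "riesz_energy s q (\<lambda>y. \<rho> (y + t)) = riesz_energy s q (\<rho> :: 'a::euclidean_space \<Rightarrow> real)"
  unfolding riesz_energy_def riesz_conv_nn_translate[OF assms]
  by (rule nn_integral_lborel_translate[of "\<lambda>x. enn_powr (riesz_conv_nn s \<rho> x) q"]) measurable

lemma riesz_energy_cmult:
  assumes "0 < s" "s < real DIM('a)" "0 \<le> a" "0 < q" and [measurable]: "\<rho> \<in> borel_measurable borel"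
  shows "riesz_energy s q (\<lambda>y. a * \<rho> y) = ennreal (a powr q) * riesz_energy s q (\<rho> :: 'a::euclidean_space \<Rightarrow> real)"
  unfolding riesz_energy_def using assms
  by (simp add: riesz_conv_nn_cmult enn_powr_mult nn_integral_cmult)

lemma riesz_conv_nn_pos:
  assumes "0 < s" "s < real DIM('a)" and [measurable]: "\<rho> \<in> borel_measurable borel"
    and nn: "\<And>y. 0 \<le> \<rho> y" and nz: "\<not> (AE y in lborel. \<rho> y = 0)"
  shows "0 < riesz_conv_nn s \<rho> (x :: 'a::euclidean_space)"
proof (rule ccontr)
  assume "\<not> 0 < riesz_conv_nn s \<rho> x"
  then have "riesz_conv_nn s \<rho> x = 0" by (simp add: zero_less_iff_neq_zero)
  then have "AE y in lborel. ennreal (riesz_kernel s (x - y) * \<rho> y) = 0"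
    unfolding riesz_conv_nn_def by (subst (asm) nn_integral_0_iff_AE) auto
  moreover have "AE y in lborel. y \<noteq> x" by (rule AE_lborel_singleton)
  ultimately have "AE y in lborel. \<rho> y = 0"
  proof eventually_elim
    case (elim y)
    then have "0 < riesz_kernel s (x - y)" using assms by (intro riesz_kernel_pos) auto
    then show ?case using elim nn[of y]
      by (auto simp: ennreal_eq_0_iff mult_le_0_iff)
  qed
  then show False using nz by simp
qed

lemma riesz_energy_pos:
  assumes "0 < s" "s < real DIM('a)" and [measurable]: "\<rho> \<in> borel_measurable borel"
    and nn: "\<And>y. 0 \<le> \<rho> y" and nz: "\<not> (AE y in lborel. \<rho> y = 0)"
  shows "0 < riesz_energy s q (\<rho> :: 'a::euclidean_space \<Rightarrow> real)"
proof (rule ccontr)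
  assume "\<not> 0 < riesz_energy s q \<rho>"
  then have "riesz_energy s q \<rho> = 0" by (simp add: zero_less_iff_neq_zero)
  then have ae: "AE x in lborel. enn_powr (riesz_conv_nn s \<rho> x) q = 0"
    unfolding riesz_energy_def by (subst (asm) nn_integral_0_iff_AE) auto
  have pos: "0 < enn_powr (riesz_conv_nn s \<rho> x) q" for x :: 'a
    by (rule enn_powr_pos, rule riesz_conv_nn_pos) (use assms in auto)
  from ae have "AE x in (lborel::'a measure). False"
  proof eventually_elim
    case (elim x) then show ?case using pos[of x] by simp
  qed
  then have "ae_filter (lborel::'a measure) = bot" using trivial_limit_def by blast
  then show False by (simp add: ae_filter_eq_bot_iff emeasure_lborel_UNIV)
qed

lemma riesz_conv_nn_near_far:
  assumes "0 < s" "s < real DIM('a)" and [measurable]: "\<rho> \<in> borel_measurable borel" and nn: "\<And>y. 0 \<le> \<rho> y"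
  shows "riesz_conv_nn s \<rho> (x::'a::euclidean_space) = (\<integral>\<^sup>+y. ennreal (riesz_kernel_near s (x - y) * \<rho> y) \<partial>lborel) + (\<integral>\<^sup>+y. ennreal (riesz_kernel_far s (x - y) * \<rho> y) \<partial>lborel)"
    (is "_ = ?A + ?B")
proof -
  have "riesz_conv_nn s \<rho> x = (\<integral>\<^sup>+y. ennreal (riesz_kernel_near s (x - y) * \<rho> y) + ennreal (riesz_kernel_far s (x - y) * \<rho> y) \<partial>(lborel::'a measure))"
    unfolding riesz_conv_nn_def
  proof (intro nn_integral_cong)
    fix y :: 'a
    have "0 \<le> riesz_kernel_near s (x - y) * \<rho> y" "0 \<le> riesz_kernel_far s (x - y) * \<rho> y"
      using riesz_kernel_near_far_nonneg[OF assms(1,2), of "x - y"] nn[of y] by auto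
    then show "ennreal (riesz_kernel s (x - y) * \<rho> y) = ennreal (riesz_kernel_near s (x - y) * \<rho> y) + ennreal (riesz_kernel_far s (x - y) * \<rho> y)"
      by (simp add: riesz_kernel_near_far_sum[of s "x - y"] distrib_right ennreal_plus)
  qed
  also have "\<dots> = ?A + ?B" by (rule nn_integral_add) measurable
  finally show ?thesis .
qed

lemma riesz_energy_le_near_far:
  fixes \<rho> :: "'a::euclidean_space \<Rightarrow> real"
  assumes s: "0 < s" "s < real DIM('a)" and q: "0 \<le> q"
    and [measurable]: "\<rho> \<in> borel_measurable borel" and nn: "\<And>y. 0 \<le> \<rho> y"
  shows "riesz_energy s q \<rho> \<le> ennreal (2 powr q) *
    ((\<integral>\<^sup>+x. enn_powr (\<integral>\<^sup>+y. ennreal (riesz_kernel_near s (x - y) * \<rho> y) \<partial>lborel) q \<partial>lborel)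
     + (\<integral>\<^sup>+x. enn_powr (\<integral>\<^sup>+y. ennreal (riesz_kernel_far s (x - y) * \<rho> y) \<partial>lborel) q \<partial>lborel))"
proof -
  have "riesz_energy s q \<rho> \<le> (\<integral>\<^sup>+x. ennreal (2 powr q) *
      (enn_powr (\<integral>\<^sup>+y. ennreal (riesz_kernel_near s (x - y) * \<rho> y) \<partial>lborel) q
       + enn_powr (\<integral>\<^sup>+y. ennreal (riesz_kernel_far s (x - y) * \<rho> y) \<partial>lborel) q) \<partial>lborel)"
    unfolding riesz_energy_def riesz_conv_nn_near_far[OF s \<open>\<rho> \<in> _\<close> nn]
    using q by (intro nn_integral_mono enn_powr_add_le)
  also have "\<dots> = ennreal (2 powr q) *
    ((\<integral>\<^sup>+x. enn_powr (\<integral>\<^sup>+y. ennreal (riesz_kernel_near s (x - y) * \<rho> y) \<partial>lborel) q \<partial>lborel)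
     + (\<integral>\<^sup>+x. enn_powr (\<integral>\<^sup>+y. ennreal (riesz_kernel_far s (x - y) * \<rho> y) \<partial>lborel) q \<partial>lborel))"
    by (simp add: nn_integral_cmult nn_integral_add)
  finally show ?thesis .
qed

lemma nn_integral_powr_interpolate:
  fixes \<rho> :: "'b \<Rightarrow> real"
  assumes [measurable]: "\<rho> \<in> borel_measurable M" and nn: "\<And>y. 0 \<le> \<rho> y" and m1: "1 < m1" "m1 < m"
  shows "(\<integral>\<^sup>+y. ennreal (\<rho> y powr m1) \<partial>M)
    \<le> enn_powr (\<integral>\<^sup>+y. ennreal (\<rho> y powr m) \<partial>M) ((m1 - 1)/(m - 1))
      * enn_powr (\<integral>\<^sup>+y. ennreal (\<rho> y) \<partial>M) (1 - (m1 - 1)/(m - 1))"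
proof -
  define \<theta> where "\<theta> = (m1 - 1)/(m - 1)"
  have "(m - 1) * \<theta> = m1 - 1" using m1 by (simp add: \<theta>_def)
  then have "m * \<theta> + (1 - \<theta>) = m1" by (simp add: algebra_simps)
  then have "\<rho> y powr m1 = (\<rho> y powr m) powr \<theta> * \<rho> y powr (1 - \<theta>)" for y
    using nn[of y] by (simp add: powr_powr powr_add[symmetric])
  moreover have "0 < \<theta>" "\<theta> < 1" using m1 by (auto simp: \<theta>_def)
  ultimately show ?thesis
    unfolding \<theta>_def[symmetric] using nn by (simp only:) (intro nn_integral_Holder; simp)
qed

text \<open>Young's inequality for the near part of the kernel (in \<open>L\<^sup>t\<close>), the \<open>L\<^sup>1\<close>-\<open>L\<^sup>q\<close> bound for the far part
  (in \<open>L\<^sup>q\<close>), and interpolation of \<open>L\<^bsup>m\<^sub>1\<^esup>\<close> between \<open>L\<^sup>1\<close> and \<open>L\<^sup>m\<close>.\<close>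

lemma riesz_energy_Young_bound:
  fixes \<rho> :: "'a::euclidean_space \<Rightarrow> real"
  assumes s: "0 < s" "s < real DIM('a)" and q: "1 < q" and qN: "real DIM('a) < (real DIM('a) - s) * q"
    and t: "1 < t" "t < q" and tN: "(real DIM('a) - s) * t < real DIM('a)"
    and m1: "1 < m1" "m1 < q" "m1 < m" and rel: "1/t + 1/m1 = 1 + 1/q"
  obtains A B where "0 \<le> A" "0 \<le> B"
    "\<And>(\<rho> :: 'a \<Rightarrow> real) M0 E0. \<rho> \<in> borel_measurable borel \<Longrightarrow> (\<And>y. 0 \<le> \<rho> y)
      \<Longrightarrow> (\<integral>\<^sup>+y. ennreal (\<rho> y) \<partial>lborel) = ennreal M0 \<Longrightarrow> 0 \<le> M0
      \<Longrightarrow> (\<integral>\<^sup>+y. ennreal (\<rho> y powr m) \<partial>lborel) = ennreal E0 \<Longrightarrow> 0 \<le> E0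
      \<Longrightarrow> riesz_energy s q \<rho> \<le> ennreal (A * M0 powr ((1 - (m1 - 1)/(m - 1)) * (q/m1))
            * E0 powr ((m1 - 1)/(m - 1) * (q/m1)) + B * M0 powr q)"
proof -
  define \<theta> where "\<theta> = (m1 - 1)/(m - 1)"
  have th: "0 < \<theta>" "\<theta> < 1" using m1 by (auto simp: \<theta>_def)
  have "(\<integral>\<^sup>+y. ennreal (riesz_kernel_near s y powr t) \<partial>(lborel::'a measure)) < top"
    using nn_integral_riesz_kernel_near_powr_finite[OF s, of t] t tN by simp
  then obtain kt where kt: "(\<integral>\<^sup>+y. ennreal (riesz_kernel_near s y powr t) \<partial>(lborel::'a measure)) = ennreal kt" "0 \<le> kt"
    by (cases "\<integral>\<^sup>+y. ennreal (riesz_kernel_near s y powr t) \<partial>(lborel::'a measure)") auto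
  have "(\<integral>\<^sup>+y. ennreal (riesz_kernel_far s y powr q) \<partial>(lborel::'a measure)) < top"
    using nn_integral_riesz_kernel_far_powr_finite[OF s, of q] q qN by simp
  then obtain kq where kq: "(\<integral>\<^sup>+y. ennreal (riesz_kernel_far s y powr q) \<partial>(lborel::'a measure)) = ennreal kq" "0 \<le> kq"
    by (cases "\<integral>\<^sup>+y. ennreal (riesz_kernel_far s y powr q) \<partial>(lborel::'a measure)") auto
  show ?thesis
  proof (rule that[of "2 powr q * kt powr (q/t)" "2 powr q * kq"])
    fix \<rho> :: "'a \<Rightarrow> real" and M0 E0 :: real
    assume [measurable]: "\<rho> \<in> borel_measurable borel" and nn: "\<And>y. 0 \<le> \<rho> y"
      and M0: "(\<integral>\<^sup>+y. ennreal (\<rho> y) \<partial>lborel) = ennreal M0" "0 \<le> M0"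
      and E0: "(\<integral>\<^sup>+y. ennreal (\<rho> y powr m) \<partial>lborel) = ennreal E0" "0 \<le> E0"
    have near: "(\<integral>\<^sup>+x. enn_powr (\<integral>\<^sup>+y. ennreal (riesz_kernel_near s (x - y) * \<rho> y) \<partial>lborel) q \<partial>lborel)
        \<le> enn_powr (ennreal kt) (q/t) * enn_powr (\<integral>\<^sup>+y. ennreal (\<rho> y powr m1) \<partial>lborel) (q/m1)"
      unfolding kt(1)[symmetric]
      by (rule nn_integral_convolution_Young) (use riesz_kernel_near_far_nonneg[OF s] nn t m1 rel in auto)
    also have "\<dots> \<le> enn_powr (ennreal kt) (q/t) * enn_powr (enn_powr (ennreal E0) \<theta> * enn_powr (ennreal M0) (1 - \<theta>)) (q/m1)"
      using nn_integral_powr_interpolate[of \<rho> lborel, OF _ nn m1(1,3)] m1 unfolding \<theta>_def[symmetric] E0(1) M0(1)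
      by (intro mult_left_mono enn_powr_mono) auto
    finally have near': "(\<integral>\<^sup>+x. enn_powr (\<integral>\<^sup>+y. ennreal (riesz_kernel_near s (x - y) * \<rho> y) \<partial>lborel) q \<partial>lborel)
        \<le> ennreal (kt powr (q/t) * M0 powr ((1 - \<theta>) * (q/m1)) * E0 powr (\<theta> * (q/m1)))"
      using kt M0 E0 th m1 by (simp add: ennreal_mult[symmetric] powr_mult powr_powr mult_ac)
    have far: "(\<integral>\<^sup>+x. enn_powr (\<integral>\<^sup>+y. ennreal (riesz_kernel_far s (x - y) * \<rho> y) \<partial>lborel) q \<partial>lborel)
        \<le> ennreal (kq * M0 powr q)"
      using nn_integral_convolution_L1[of "riesz_kernel_far s" \<rho> q] riesz_kernel_near_far_nonneg[OF s] nn q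
      unfolding kq(1) M0(1) using kq M0 by (simp add: ennreal_mult)
    have "riesz_energy s q \<rho> \<le> ennreal (2 powr q) * (ennreal (kt powr (q/t) * M0 powr ((1 - \<theta>) * (q/m1)) * E0 powr (\<theta> * (q/m1)))
        + ennreal (kq * M0 powr q))"
      using q by (intro order_trans[OF riesz_energy_le_near_far[OF s _ \<open>\<rho> \<in> _\<close> nn]]
          mult_left_mono add_mono near' far) auto
    also have "\<dots> = ennreal (2 powr q * kt powr (q/t) * M0 powr ((1 - \<theta>) * (q/m1)) * E0 powr (\<theta> * (q/m1))
        + 2 powr q * kq * M0 powr q)"
      using kt kq by (simp add: ennreal_mult[symmetric] ennreal_plus[symmetric] algebra_simps del: ennreal_plus)
    finally show "riesz_energy s q \<rho> \<le> ennreal (2 powr q * kt powr (q/t) * M0 powr ((1 - (m1 - 1)/(m - 1)) * (q/m1))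
        * E0 powr ((m1 - 1)/(m - 1) * (q/m1)) + 2 powr q * kq * M0 powr q)"
      by (simp only: \<theta>_def)
  qed (use kt kq in auto)
qed

lemma riesz_conv_nn_finite_if_bounded:
  fixes \<rho> :: "'a::euclidean_space \<Rightarrow> real"
  assumes s: "0 < s" "s < real DIM('a)" and [measurable]: "\<rho> \<in> borel_measurable borel"
    and b: "\<And>y. 0 \<le> \<rho> y" "\<And>y. \<rho> y \<le> B * indicator (cball 0 R) y" and B: "0 \<le> B"
  shows "riesz_conv_nn s \<rho> x < top"
proof -
  define c where "c = riesz_const DIM('a) (s/2)"
  have c: "0 < c" unfolding c_def using riesz_const_pos[OF s] .
  have "riesz_conv_nn s \<rho> x \<le> (\<integral>\<^sup>+y. ennreal B * ennreal (riesz_kernel_near s (x - y)) + ennreal (B * c) * indicator (cball 0 R) y \<partial>lborel)"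
    unfolding riesz_conv_nn_def
  proof (rule nn_integral_mono)
    fix y :: 'a
    have k: "riesz_kernel s (x - y) = riesz_kernel_near s (x - y) + riesz_kernel_far s (x - y)" by (rule riesz_kernel_near_far_sum)
    have k1: "0 \<le> riesz_kernel_near s (x - y)" "0 \<le> riesz_kernel_far s (x - y)" using riesz_kernel_near_far_nonneg[OF s] by auto
    have k2: "riesz_kernel_far s (x - y) \<le> c"
      using riesz_kernel_le_exterior[OF s, of "x - y"] c by (auto simp: riesz_kernel_far_def c_def indicator_def)
    have "riesz_kernel s (x - y) * \<rho> y \<le> (riesz_kernel_near s (x - y) + riesz_kernel_far s (x - y)) * (B * indicator (cball 0 R) y)"
      unfolding k using b[of y] k1 by (intro mult_left_mono) auto
    also have "\<dots> \<le> B * riesz_kernel_near s (x - y) + B * c * indicator (cball 0 R) y"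
      using k1 k2 B by (auto simp: indicator_def algebra_simps mult_left_mono)
    finally show "ennreal (riesz_kernel s (x - y) * \<rho> y) \<le> ennreal B * ennreal (riesz_kernel_near s (x - y)) + ennreal (B * c) * indicator (cball 0 R) y"
      using B c k1 by (simp add: ennreal_mult[symmetric] ennreal_plus[symmetric] ennreal_indicator[symmetric] del: ennreal_plus)
  qed
  also have "\<dots> = (\<integral>\<^sup>+y. ennreal B * ennreal (riesz_kernel_near s (x - y)) \<partial>lborel) + (\<integral>\<^sup>+y. ennreal (B * c) * indicator (cball (0::'a) R) y \<partial>lborel)"
    by (rule nn_integral_add; measurable)
  also have "\<dots> = ennreal B * (\<integral>\<^sup>+y. ennreal (riesz_kernel_near s (x - y)) \<partial>lborel) + ennreal (B * c) * emeasure lborel (cball (0::'a) R)"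
    by (simp add: nn_integral_cmult nn_integral_cmult_indicator)
  also have "(\<integral>\<^sup>+y. ennreal (riesz_kernel_near s (x - y)) \<partial>lborel) = (\<integral>\<^sup>+y. ennreal (riesz_kernel_near s y) \<partial>(lborel::'a measure))"
    by (rule nn_integral_lborel_reflect[of "\<lambda>y. ennreal (riesz_kernel_near s y)"]) measurable
  also have "ennreal B * \<dots> + ennreal (B * c) * emeasure lborel (cball (0::'a) R) < top"
    using nn_integral_riesz_kernel_near_finite[OF s] emeasure_lborel_cball_finite[of "0::'a" R]
    by (simp add: ennreal_mult_less_top)
  finally show ?thesis .
qed

lemma riesz_conv_nn_eq_riesz_conv:
  fixes \<rho> :: "'a::euclidean_space \<Rightarrow> real"
  assumes s: "0 < s" "s < real DIM('a)" and [measurable]: "\<rho> \<in> borel_measurable borel"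
    and nn: "\<And>y. 0 \<le> \<rho> y" and fin: "riesz_conv_nn s \<rho> x < top"
  shows "riesz_conv_nn s \<rho> x = ennreal (riesz_conv s \<rho> x)" "0 \<le> riesz_conv s \<rho> x"
proof -
  have nnk: "0 \<le> riesz_kernel s (x - y) * \<rho> y" for y using riesz_kernel_nonneg[OF s] nn by simp
  have int: "integrable lborel (\<lambda>y. riesz_kernel s (x - y) * \<rho> y)"
    using fin nnk unfolding riesz_conv_nn_def by (intro integrableI_bounded) auto
  show "riesz_conv_nn s \<rho> x = ennreal (riesz_conv s \<rho> x)"
    unfolding riesz_conv_nn_def riesz_conv_def using int nnk by (intro nn_integral_eq_integral) auto
  show "0 \<le> riesz_conv s \<rho> x"
    unfolding riesz_conv_def using nnk by (intro integral_nonneg_AE) auto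
qed

lemma ennreal_abs_riesz_conv_powr_eq:
  fixes \<rho> :: "'a::euclidean_space \<Rightarrow> real"
  assumes s: "0 < s" "s < real DIM('a)" and [measurable]: "\<rho> \<in> borel_measurable borel"
    and nn: "\<And>y. 0 \<le> \<rho> y" and fin: "riesz_conv_nn s \<rho> x < top"
  shows "ennreal (\<bar>riesz_conv s \<rho> x\<bar> powr q) = enn_powr (riesz_conv_nn s \<rho> x) q"
  using riesz_conv_nn_eq_riesz_conv[OF assms] by simp

lemma ennreal_abs_riesz_conv_powr_le:
  fixes h :: "'a::euclidean_space \<Rightarrow> real"
  assumes s: "0 < s" "s < real DIM('a)" and [measurable]: "h \<in> borel_measurable borel" and q: "0 < q"
  shows "ennreal (\<bar>riesz_conv s h x\<bar> powr q) \<le> enn_powr (riesz_conv_nn s (\<lambda>y. \<bar>h y\<bar>) x) q"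
proof (cases "integrable lborel (\<lambda>y. riesz_kernel s (x - y) * h y)")
  case True
  have nnk: "0 \<le> riesz_kernel s (x - y)" for y using riesz_kernel_nonneg[OF s] by simp
  have ia: "integrable lborel (\<lambda>y. riesz_kernel s (x - y) * \<bar>h y\<bar>)"
    using integrable_abs[OF True] nnk by (simp add: abs_mult)
  have eq: "riesz_conv_nn s (\<lambda>y. \<bar>h y\<bar>) x = ennreal (\<integral>y. riesz_kernel s (x - y) * \<bar>h y\<bar> \<partial>lborel)"
    unfolding riesz_conv_nn_def using ia nnk by (intro nn_integral_eq_integral) auto
  have "\<bar>riesz_conv s h x\<bar> \<le> (\<integral>y. \<bar>riesz_kernel s (x - y) * h y\<bar> \<partial>lborel)"
    unfolding riesz_conv_def by (rule integral_abs_bound)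
  also have "\<dots> = (\<integral>y. riesz_kernel s (x - y) * \<bar>h y\<bar> \<partial>lborel)"
    using nnk by (simp add: abs_mult)
  finally have le: "\<bar>riesz_conv s h x\<bar> \<le> (\<integral>y. riesz_kernel s (x - y) * \<bar>h y\<bar> \<partial>lborel)" .
  have "0 \<le> (\<integral>y. riesz_kernel s (x - y) * \<bar>h y\<bar> \<partial>lborel)"
    using nnk by (intro integral_nonneg_AE) auto
  then show ?thesis unfolding eq using le q
    by (simp add: ennreal_leI powr_mono2)
next
  case False
  then have "riesz_conv s h x = 0" unfolding riesz_conv_def by (rule not_integrable_integral_eq)
  then show ?thesis using q by simp
qed

lemma riesz_energy_le_SUP:
  fixes \<rho> :: "'a::euclidean_space \<Rightarrow> real" and \<sigma> :: "nat \<Rightarrow> 'a \<Rightarrow> real"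
  assumes s: "0 < s" "s < real DIM('a)" and q: "0 < q"
    and [measurable]: "\<rho> \<in> borel_measurable borel" "\<And>n. \<sigma> n \<in> borel_measurable borel"
    and nn: "\<And>n y. 0 \<le> \<sigma> n y" and le: "\<And>n y. \<sigma> n y \<le> \<rho> y"
    and inc: "\<And>n y. \<sigma> n y \<le> \<sigma> (Suc n) y" and ex: "\<And>y. \<exists>n. \<sigma> n y = \<rho> y"
  shows "riesz_energy s q \<rho> \<le> (SUP n. riesz_energy s q (\<sigma> n))"
proof -
  have nnk: "0 \<le> riesz_kernel s z" for z :: 'a using riesz_kernel_nonneg[OF s] by simp
  have conv: "riesz_conv_nn s \<rho> x = (SUP n. riesz_conv_nn s (\<sigma> n) x)" for x
  proof -
    have "(SUP n. riesz_conv_nn s (\<sigma> n) x) = (\<integral>\<^sup>+y. (SUP n. ennreal (riesz_kernel s (x - y) * \<sigma> n y)) \<partial>lborel)"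
      unfolding riesz_conv_nn_def
    proof (rule nn_integral_monotone_convergence_SUP[symmetric])
      show "incseq (\<lambda>n y. ennreal (riesz_kernel s (x - y) * \<sigma> n y))"
        by (rule incseq_SucI) (auto simp: le_fun_def intro!: ennreal_leI mult_left_mono inc nnk)
    qed measurable
    also have "\<dots> = riesz_conv_nn s \<rho> x"
      unfolding riesz_conv_nn_def
    proof (rule nn_integral_cong)
      fix y :: 'a
      obtain n where n: "\<sigma> n y = \<rho> y" using ex by blast
      show "(SUP n. ennreal (riesz_kernel s (x - y) * \<sigma> n y)) = ennreal (riesz_kernel s (x - y) * \<rho> y)"
      proof (rule antisym)
        show "(SUP n. ennreal (riesz_kernel s (x - y) * \<sigma> n y)) \<le> ennreal (riesz_kernel s (x - y) * \<rho> y)"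
          by (rule SUP_least) (auto intro!: ennreal_leI mult_left_mono le nnk)
        show "ennreal (riesz_kernel s (x - y) * \<rho> y) \<le> (SUP n. ennreal (riesz_kernel s (x - y) * \<sigma> n y))"
          using n by (intro SUP_upper2[of n]) auto
      qed
    qed
    finally show ?thesis by simp
  qed
  have "riesz_energy s q \<rho> \<le> (\<integral>\<^sup>+x. (SUP n. enn_powr (riesz_conv_nn s (\<sigma> n) x) q) \<partial>lborel)"
    unfolding riesz_energy_def conv using q by (intro nn_integral_mono enn_powr_SUP_le)
  also have "\<dots> = (SUP n. riesz_energy s q (\<sigma> n))"
    unfolding riesz_energy_def
  proof (rule nn_integral_monotone_convergence_SUP)
    show "incseq (\<lambda>n x. enn_powr (riesz_conv_nn s (\<sigma> n) x) q)"
      by (rule incseq_SucI)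
         (auto simp: le_fun_def intro!: enn_powr_mono riesz_conv_nn_mono[OF s] inc less_imp_le[OF q])
  qed measurable
  finally show ?thesis .
qed

lemma riesz_energy_AE_zero:
  fixes \<sigma> :: "'a::euclidean_space \<Rightarrow> real"
  assumes [measurable]: "\<sigma> \<in> borel_measurable borel" and ae: "AE y in lborel. \<sigma> y = 0"
  shows "riesz_energy s q \<sigma> = 0"
proof -
  have "riesz_conv_nn s \<sigma> x = 0" for x
    unfolding riesz_conv_nn_def using ae by (subst nn_integral_0_iff_AE) (auto elim!: AE_mp)
  then show ?thesis by (simp add: riesz_energy_def)
qed

lemma exponent_bounds:
  assumes p: "1 < p" and sp: "0 < s * p" "s * p < real N"
  shows "0 < s" "s < real N" "1 < conj_exp p" "real N < (real N - s) * conj_exp p"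
proof -
  show s: "0 < s" using sp p by (simp add: zero_less_mult_iff)
  have "s * 1 < s * p" using s p by simp
  then show "s < real N" using sp by simp
  show "1 < conj_exp p" using p by (simp add: conj_exp_def)
  have "real N < (real N - s) * conj_exp p \<longleftrightarrow> real N * (p - 1) < (real N - s) * p"
    using p by (simp add: conj_exp_def field_simps)
  also have "\<dots> \<longleftrightarrow> s * p < real N" by (simp add: algebra_simps)
  finally show "real N < (real N - s) * conj_exp p" using sp by simp
qed

lemma crit_exp_scaling:
  assumes "0 < N"
  shows "real N * (crit_exp N s p - 1) = (real N - s) * conj_exp p - real N"
  using assms by (simp add: crit_exp_def algebra_simps)

lemma crit_exp_gt_one:
  assumes "1 < p" "0 < s * p" "s * p < real N"
  shows "1 < crit_exp N s p"
proof -
  have "0 < N" using assms by simp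
  then have "0 < real N * (crit_exp N s p - 1)"
    using crit_exp_scaling exponent_bounds(4)[OF assms] by simp
  then show ?thesis by (simp add: zero_less_mult_iff)
qed

lemma sob_exp_div_conj_exp:
  assumes p: "1 < p" and sp: "0 < s * p" "s * p < real N"
  shows "sob_exp N s p / conj_exp p = 1 / (crit_exp N s p - 1)"
proof -
  have N: "0 < real N" "0 < real N * (p - 1)" "0 < real N - s * p" using p sp by auto
  have qp: "conj_exp p * (p - 1) = p" using p by (simp add: conj_exp_def)
  have "(crit_exp N s p - 1) * (real N * (p - 1))
      = conj_exp p * (p - 1) * real N - s * (conj_exp p * (p - 1)) - real N * (p - 1)"
    using N by (simp add: crit_exp_def field_simps)
  also have "\<dots> = real N - s * p" unfolding qp by (simp add: algebra_simps)
  finally have "crit_exp N s p - 1 = (real N - s * p) / (real N * (p - 1))"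
    by (rule eq_divide_imp[rotated]) (use N p in simp)
  then show ?thesis using p N by (simp add: sob_exp_def conj_exp_def)
qed

lemma sob_exp_pos: "1 < p \<Longrightarrow> 0 < s * p \<Longrightarrow> s * p < real N \<Longrightarrow> 0 < sob_exp N s p"
  by (simp add: sob_exp_def)

lemma Young_exponent_interval:
  fixes N s q m :: real
  assumes N: "0 < N" and s: "0 < s" "s < N" and q: "1 < q" and qN: "N < (N - s) * q"
    and m: "1 < m" "q - s * q / N < m"
  shows "1/q + s/N < 1" "max (1/q) (max (1/m) (1 - (m - 1) / q)) < 1/q + s/N"
proof -
  define a where "a = 1/q"
  define b where "b = s/N"
  have b: "0 < b" using s N by (simp add: b_def)
  have "N < N * q - s * q" using qN by (simp add: algebra_simps)
  then have "N / (N * q) < (N * q - s * q) / (N * q)" using N q by (intro divide_strict_right_mono) auto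
  then show "1/q + s/N < 1" using N q by (simp add: field_simps)
  have "0 < (m - (q - s * q / N)) / q" using m q by simp
  also have "(m - (q - s * q / N)) / q = m * a - (1 - b)"
    using N q by (simp add: a_def b_def field_simps)
  finally have ma: "1 - b < m * a" by simp
  have "1 < m * (a + b)"
    using ma mult_pos_pos[OF _ b, of "m - 1"] m by (simp add: algebra_simps)
  then have "1/m < a + b" using m by (simp add: field_simps)
  moreover have "1 - (m - 1) * a < a + b" using ma by (simp add: algebra_simps)
  moreover have "a < a + b" using b by simp
  ultimately show "max (1/q) (max (1/m) (1 - (m - 1) / q)) < 1/q + s/N"
    by (simp add: a_def b_def)
qed

text \<open>Any \<open>1/m\<^sub>1\<close> in the interval above, together with \<open>1/t = 1 + 1/q - 1/m\<^sub>1\<close>, will do.\<close>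

lemma Young_exponents_exist:
  fixes N s q m :: real
  assumes N: "0 < N" and s: "0 < s" "s < N" and q: "1 < q" and qN: "N < (N - s) * q"
    and m: "1 < m" "q - s * q / N < m"
  shows "\<exists>t m1. 1 < t \<and> t < q \<and> 1 < m1 \<and> m1 < q \<and> m1 < m \<and> 1/t + 1/m1 = 1 + 1/q
     \<and> (N - s) * t < N \<and> (m1 - 1)/(m - 1) * (q/m1) < 1"
proof -
  define a where "a = 1/q"
  define b where "b = s/N"
  note I = Young_exponent_interval[OF assms, folded a_def b_def]
  have a: "0 < a" "a < 1" using q by (auto simp: a_def)
  define L where "L = max a (max (1/m) (1 - (m - 1) / q))"
  have L: "a \<le> L" "1/m \<le> L" "1 - (m - 1) * a \<le> L" "L < a + b"
    using I(2) by (auto simp: L_def a_def)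
  define v where "v = (L + (a + b)) / 2"
  have va: "a < v" "1/m < v" "1 - (m - 1) * a < v" "v < a + b"
    using L by (simp_all add: v_def)
  have v1: "v < 1" using va I(1) by simp
  have vpos: "0 < v" using va a by simp
  define m1 where "m1 = 1 / v"
  define t where "t = 1 / (1 + a - v)"
  have upos: "0 < 1 + a - v" using v1 a by simp
  show ?thesis
  proof (intro exI conjI)
    show "1 < t" using va(1) upos a by (simp add: t_def field_simps)
    show "t < q" using upos v1 q by (simp add: t_def a_def field_simps)
    show "1 < m1" using v1 vpos by (simp add: m1_def field_simps)
    show "m1 < q" using va(1) vpos q by (simp add: m1_def a_def field_simps)
    show "m1 < m" using va(2) vpos m by (simp add: m1_def field_simps)
    show "1/t + 1/m1 = 1 + 1/q" using vpos upos by (simp add: t_def m1_def a_def)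
    have "(1 - b) * t < (1 + a - v) * t"
      using va(4) upos by (intro mult_strict_right_mono) (auto simp: t_def)
    also have "\<dots> = 1" using upos by (simp add: t_def)
    finally have "N * ((1 - b) * t) < N" using N by simp
    then show "(N - s) * t < N" using N by (simp add: b_def algebra_simps)
    have "(m1 - 1)/(m - 1) * (q/m1) = (1 - v) / ((m - 1) * a)"
      using vpos v1 m a q by (simp add: m1_def a_def field_simps)
    also have "\<dots> < 1" using va(3) m a by (simp add: field_simps)
    finally show "(m1 - 1)/(m - 1) * (q/m1) < 1" .
  qed
qed

lemma powr_le_linear_plus_const:
  fixes k e \<beta> :: real
  assumes "0 \<le> k" "0 < e" "0 < \<beta>" "\<beta> < 1"
  shows "\<exists>C. \<forall>E\<ge>0. k * E powr \<beta> \<le> e * E + C"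
proof -
  define E0 where "E0 = (k / e) powr (1 / (1 - \<beta>))"
  show ?thesis
  proof (intro exI allI impI)
    fix E :: real assume E: "0 \<le> E"
    show "k * E powr \<beta> \<le> e * E + k * E0 powr \<beta>"
    proof (cases "E \<le> E0")
      case True
      then have "E powr \<beta> \<le> E0 powr \<beta>" using E assms by (intro powr_mono2) auto
      then have "k * E powr \<beta> \<le> k * E0 powr \<beta>" using assms by (intro mult_left_mono) auto
      then show ?thesis using E assms by (smt (verit) mult_nonneg_nonneg)
    next
      case False
      have "0 \<le> E0" by (simp add: E0_def)
      then have Epos: "0 < E" "E0 < E" using E False by auto
      have "E0 powr (1 - \<beta>) \<le> E powr (1 - \<beta>)" using Epos assms
        by (intro powr_mono2) (auto simp: E0_def)
      moreover have "E0 powr (1 - \<beta>) = k / e" using assms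
        by (simp add: E0_def powr_powr)
      ultimately have "k / e \<le> E powr (1 - \<beta>)" by simp
      then have "k \<le> e * E powr (1 - \<beta>)" using assms by (simp add: field_simps)
      then have "k * E powr \<beta> \<le> e * E powr (1 - \<beta>) * E powr \<beta>" by (intro mult_right_mono) auto
      also have "\<dots> = e * E" using Epos by (simp add: mult.assoc powr_add[symmetric])
      finally show ?thesis using assms by (smt (verit) mult_nonneg_nonneg powr_ge_zero)
    qed
  qed
qed

lemma powr_diff_unbounded_below:
  fixes a b X Y B :: real
  assumes "0 < a" "a < b" "0 \<le> X" "0 < Y"
  shows "\<exists>c>0. c powr a * X - c powr b * Y < B"
proof -
  define c where "c = max 1 (((X + 1 + \<bar>B\<bar>) / Y) powr (1 / (b - a)))"
  have c1: "1 \<le> c" by (simp add: c_def)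
  have "((X + 1 + \<bar>B\<bar>) / Y) powr (1 / (b - a)) \<le> c" by (simp add: c_def)
  then have "(((X + 1 + \<bar>B\<bar>) / Y) powr (1 / (b - a))) powr (b - a) \<le> c powr (b - a)"
    using assms by (intro powr_mono2) auto
  also have "(((X + 1 + \<bar>B\<bar>) / Y) powr (1 / (b - a))) powr (b - a) = (X + 1 + \<bar>B\<bar>) / Y"
    using assms by (simp add: powr_powr)
  finally have "X + 1 + \<bar>B\<bar> \<le> c powr (b - a) * Y" using assms by (simp add: field_simps)
  then have "c powr a * (X + 1 + \<bar>B\<bar>) \<le> c powr a * (c powr (b - a) * Y)"
    by (intro mult_left_mono) auto
  also have "\<dots> = c powr b * Y" using c1 by (simp add: mult.assoc[symmetric] powr_add[symmetric])
  finally have st: "c powr a * X - c powr b * Y \<le> - (c powr a * (1 + \<bar>B\<bar>))" by (simp add: algebra_simps)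
  have "1 \<le> c powr a" using c1 assms by (simp add: ge_one_powr_ge_zero)
  then have "c powr a * (1 + \<bar>B\<bar>) \<ge> 1 + \<bar>B\<bar>" by (simp add: mult_le_cancel_right1)
  then have "c powr a * X - c powr b * Y < B" using st by linarith
  then show ?thesis using c1 by (intro exI[of _ c]) auto
qed

lemma powr_diff_neg_exists:
  fixes a b X Y :: real
  assumes "0 < b" "b < a" "0 \<le> X" "0 < Y"
  shows "\<exists>c>0. c powr a * X - c powr b * Y < 0"
proof -
  define c where "c = min 1 ((Y / (2 * (X + 1))) powr (1 / (a - b)))"
  have cpos: "0 < c" using assms by (simp add: c_def)
  have "c \<le> (Y / (2 * (X + 1))) powr (1 / (a - b))" by (simp add: c_def)
  then have "c powr (a - b) \<le> ((Y / (2 * (X + 1))) powr (1 / (a - b))) powr (a - b)"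
    using assms cpos by (intro powr_mono2) auto
  also have "\<dots> = Y / (2 * (X + 1))" using assms by (simp add: powr_powr)
  finally have cb: "c powr (a - b) \<le> Y / (2 * (X + 1))" .
  have "c powr (a - b) * X \<le> Y / (2 * (X + 1)) * X" using cb assms by (intro mult_right_mono) auto
  also have "\<dots> < Y"
  proof -
    have "X / (2 * (X + 1)) < 1" using assms by (simp add: field_simps)
    then have "Y * (X / (2 * (X + 1))) < Y * 1" using assms by (intro mult_strict_left_mono) auto
    then show ?thesis by (simp add: field_simps)
  qed
  finally have lt: "c powr (a - b) * X < Y" .
  have "c powr a * X = c powr b * (c powr (a - b) * X)"
    using cpos by (simp add: mult.assoc[symmetric] powr_add[symmetric])
  also have "\<dots> < c powr b * Y" using lt cpos by (intro mult_strict_left_mono) auto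
  finally show ?thesis using cpos by (intro exI[of _ c]) auto
qed


lemma powr_mult_neg_unbounded_below:
  fixes f3 a B :: real
  assumes "f3 < 0" "0 < a"
  shows "\<exists>c>0. c powr a * f3 < B"
proof -
  define c where "c = ((\<bar>B\<bar> + 1) / (- f3)) powr (1 / a)"
  have c: "0 < c" using assms by (simp add: c_def)
  have "c powr a = (\<bar>B\<bar> + 1) / (- f3)" using assms by (simp add: c_def powr_powr)
  then have "c powr a * f3 = - (\<bar>B\<bar> + 1)" using assms by (simp add: field_simps)
  then show ?thesis using c by (intro exI[of _ c]) auto
qed

lemma adm_classD:
  assumes "\<rho> \<in> adm_class m M"
  shows "\<And>x. 0 \<le> \<rho> x" "integrable lborel \<rho>" "\<rho> \<in> borel_measurable borel"
    "integrable lborel (\<lambda>x. \<rho> x powr m)" "(\<integral>x. \<rho> x \<partial>lborel) = M"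
    "integrable lborel (\<lambda>x. \<rho> x *\<^sub>R x)" "(\<integral>x. \<rho> x *\<^sub>R x \<partial>lborel) = 0"
  using assms by (auto simp: adm_class_def in_Lq_def)

lemma adm_classI:
  assumes "\<And>x. 0 \<le> \<rho> x" "integrable lborel \<rho>"
    "integrable lborel (\<lambda>x. \<rho> x powr m)" "(\<integral>x. \<rho> x \<partial>lborel) = M"
    "integrable lborel (\<lambda>x. \<rho> x *\<^sub>R x)" "(\<integral>x. \<rho> x *\<^sub>R x \<partial>lborel) = 0"
  shows "\<rho> \<in> adm_class m M"
  using assms by (auto simp: adm_class_def in_Lq_def)

lemma adm_class_mass_dilate:
  fixes \<rho> :: "'a::euclidean_space \<Rightarrow> real"
  assumes \<rho>: "\<rho> \<in> adm_class m M" and c: "0 < c"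
  shows "mass_dilate c \<rho> \<in> adm_class m M"
proof (rule adm_classI)
  note D = adm_classD[OF \<rho>]
  show "0 \<le> mass_dilate c \<rho> x" for x using D(1) c by (simp add: mass_dilate_def)
  show "integrable lborel (mass_dilate c \<rho>)"
    unfolding mass_dilate_def using lborel_integrable_dilate[OF D(2) c] by simp
  have "(\<lambda>x. mass_dilate c \<rho> x powr m) = (\<lambda>x. (c ^ DIM('a)) powr m * \<rho> (c *\<^sub>R x) powr m)"
    using D(1) c by (simp add: mass_dilate_def powr_mult)
  then show "integrable lborel (\<lambda>x. mass_dilate c \<rho> x powr m)"
    using lborel_integrable_dilate[OF D(4) c] by simp
  show "(\<integral>x. mass_dilate c \<rho> x \<partial>lborel) = M"
    unfolding mass_dilate_def using c D(5)
    by (simp add: lborel_integral_dilate powr_realpow[symmetric] powr_add[symmetric])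
  have eq: "(\<lambda>x. mass_dilate c \<rho> x *\<^sub>R x) = (\<lambda>x. (c ^ DIM('a) / c) *\<^sub>R (\<rho> (c *\<^sub>R x) *\<^sub>R (c *\<^sub>R x)))"
    using c by (auto simp: mass_dilate_def)
  show "integrable lborel (\<lambda>x. mass_dilate c \<rho> x *\<^sub>R x)"
    unfolding eq by (intro integrable_scaleR_right) (rule lborel_integrable_dilate[OF D(6) c])
  have "(\<integral>x. \<rho> (c *\<^sub>R x) *\<^sub>R (c *\<^sub>R x) \<partial>lborel) = 0"
    using lborel_integral_dilate[of c "\<lambda>y. \<rho> y *\<^sub>R y"] c D(7) by simp
  then show "(\<integral>x. mass_dilate c \<rho> x *\<^sub>R x \<partial>lborel) = 0"
    unfolding eq by (simp only: integral_scaleR_right scaleR_zero_right)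
qed

lemma integral_powr_mass_dilate:
  fixes \<rho> :: "'a::euclidean_space \<Rightarrow> real"
  assumes nn: "\<And>x. 0 \<le> \<rho> x" and c: "0 < c"
  shows "(\<integral>x. mass_dilate c \<rho> x powr m \<partial>lborel) = c powr (real DIM('a) * (m - 1)) * (\<integral>x. \<rho> x powr m \<partial>lborel)"
proof -
  have "(\<lambda>x. mass_dilate c \<rho> x powr m) = (\<lambda>x. c powr (real DIM('a) * m) * \<rho> (c *\<^sub>R x) powr m)"
    using nn c by (simp add: mass_dilate_def powr_mult powr_realpow[symmetric] powr_powr)
  then have "(\<integral>x. mass_dilate c \<rho> x powr m \<partial>lborel) = c powr (real DIM('a) * m) * (c powr (- real DIM('a)) * (\<integral>x. \<rho> x powr m \<partial>lborel))"
    using c by (simp add: lborel_integral_dilate[of c "\<lambda>y. \<rho> y powr m"])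
  also have "\<dots> = c powr (real DIM('a) * (m - 1)) * (\<integral>x. \<rho> x powr m \<partial>lborel)"
    by (simp add: mult.assoc[symmetric] powr_add[symmetric] algebra_simps)
  finally show ?thesis .
qed

lemma adm_class_translate:
  fixes \<rho> :: "'a::euclidean_space \<Rightarrow> real"
  assumes nn: "\<And>x. 0 \<le> \<rho> x" and i1: "integrable lborel \<rho>" and im: "integrable lborel (\<lambda>x. \<rho> x powr m)"
    and mass: "(\<integral>x. \<rho> x \<partial>lborel) = M" and M: "0 < M" and fm: "integrable lborel (\<lambda>x. \<rho> x *\<^sub>R x)"
  shows "(\<lambda>y. \<rho> (y + (1/M) *\<^sub>R (\<integral>x. \<rho> x *\<^sub>R x \<partial>lborel))) \<in> adm_class m M"
proof -
  define t where "t = (1/M) *\<^sub>R (\<integral>x. \<rho> x *\<^sub>R x \<partial>lborel)"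
  have tr: "integrable lborel (\<lambda>y. f (y + t)) \<and> (\<integral>y. f (y + t) \<partial>lborel) = (\<integral>y. f y \<partial>lborel)"
    if "integrable lborel f" for f :: "'a \<Rightarrow> 'b::{banach, second_countable_topology}"
    using lborel_integrable_affine[OF that, of 1 t] lborel_integral_affine[of 1 f t]
    by (simp add: add.commute)
  have fm2: "integrable lborel (\<lambda>y. \<rho> y *\<^sub>R (y - t))"
    using fm i1 by (simp add: scaleR_diff_right)
  have "(\<integral>y. \<rho> (y + t) *\<^sub>R y \<partial>lborel) = (\<integral>y. \<rho> y *\<^sub>R (y - t) \<partial>lborel)"
    using tr[OF fm2] by simp
  also have "\<dots> = (\<integral>x. \<rho> x *\<^sub>R x \<partial>lborel) - (\<integral>y. \<rho> y *\<^sub>R t \<partial>lborel)"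
    using fm i1 by (simp add: scaleR_diff_right integral_diff)
  also have "(\<integral>y. \<rho> y *\<^sub>R t \<partial>lborel) = M *\<^sub>R t" using mass integral_scaleR_left[of t lborel \<rho>] i1 by simp
  also have "M *\<^sub>R t = (\<integral>x. \<rho> x *\<^sub>R x \<partial>lborel)" using M by (simp add: t_def)
  finally have fm0: "(\<integral>y. \<rho> (y + t) *\<^sub>R y \<partial>lborel) = 0" by simp
  show ?thesis unfolding t_def[symmetric]
  proof (rule adm_classI)
    show "0 \<le> \<rho> (x + t)" for x using nn by simp
    show "integrable lborel (\<lambda>y. \<rho> (y + t))" using tr[OF i1] by simp
    show "integrable lborel (\<lambda>y. \<rho> (y + t) powr m)" using tr[OF im] by simp
    show "(\<integral>y. \<rho> (y + t) \<partial>lborel) = M" using tr[OF i1] mass by simp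
    show "integrable lborel (\<lambda>y. \<rho> (y + t) *\<^sub>R y)" using tr[OF fm2] by simp
    show "(\<integral>y. \<rho> (y + t) *\<^sub>R y \<partial>lborel) = 0" by (rule fm0)
  qed
qed

definition ball_density :: "real \<Rightarrow> 'a::euclidean_space \<Rightarrow> real" where
  "ball_density M = (\<lambda>x. M / measure lborel (cball (0::'a) 1) * indicator (cball 0 1) x)"


lemma measure_unit_ball_pos: "0 < measure lborel (cball (0::'a::euclidean_space) 1)"
  by (rule content_cball_pos) simp

lemma ball_density_adm_class:
  assumes M: "0 < M" and m: "1 < m"
  shows "(ball_density M :: 'a::euclidean_space \<Rightarrow> real) \<in> adm_class m M"
proof -
  define v where "v = measure lborel (cball (0::'a) 1)"
  have v: "0 < v" unfolding v_def by (rule measure_unit_ball_pos)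
  have fin: "emeasure lborel (cball (0::'a) 1) < top" using emeasure_lborel_cball_finite[of "0::'a" 1] by simp
  have r: "ball_density M = (\<lambda>x::'a. M / v * indicator (cball 0 1) x)" by (simp add: ball_density_def v_def)
  have fmeq: "(\<lambda>x::'a. ball_density M x *\<^sub>R x) = (\<lambda>x. indicator (cball 0 1) x *\<^sub>R ((M / v) *\<^sub>R x))"
    by (auto simp: r indicator_def)
  have fmi: "integrable lborel (\<lambda>x::'a. ball_density M x *\<^sub>R x)"
    unfolding fmeq by (rule borel_integrable_compact) (auto intro!: continuous_intros)
  show ?thesis
  proof (rule adm_classI)
    show "0 \<le> ball_density M x" for x :: 'a using M v by (simp add: r indicator_def)
    show "integrable lborel (ball_density M :: 'a \<Rightarrow> real)" unfolding r using fin by simp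
    have "(\<lambda>x::'a. ball_density M x powr m) = (\<lambda>x. (M / v) powr m * indicator (cball 0 1) x)"
      using m by (auto simp: r indicator_def)
    then show "integrable lborel (\<lambda>x::'a. ball_density M x powr m)" using fin by simp
    have "(\<integral>x. ball_density M (x::'a) \<partial>lborel) = M / v * (\<integral>x. indicator (cball (0::'a) 1) x \<partial>lborel)"
      unfolding r by (rule integral_mult_right_zero)
    also have "(\<integral>x. indicator (cball (0::'a) 1) x \<partial>lborel) = v"
      unfolding v_def by simp
    finally show "(\<integral>x. ball_density M (x::'a) \<partial>lborel) = M" using v by simp
    show "integrable lborel (\<lambda>x::'a. ball_density M x *\<^sub>R x)" by (rule fmi)
    have "(\<integral>x. ball_density M (x::'a) *\<^sub>R x \<partial>lborel) = (\<bar>-1\<bar> ^ DIM('a)) *\<^sub>R (\<integral>x. ball_density M (0 + (-1) *\<^sub>R (x::'a)) *\<^sub>R (0 + (-1) *\<^sub>R x) \<partial>lborel)"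
      by (rule lborel_integral_affine[where c="-1" and f="\<lambda>x::'a. ball_density M x *\<^sub>R x" and t=0]) simp
    also have "(\<lambda>x::'a. ball_density M (0 + (-1) *\<^sub>R x) *\<^sub>R (0 + (-1) *\<^sub>R x)) = (\<lambda>x. - (ball_density M x *\<^sub>R x))"
      by (auto simp: r indicator_def)
    finally have "(\<integral>x. ball_density M (x::'a) *\<^sub>R x \<partial>lborel) = - (\<integral>x. ball_density M (x::'a) *\<^sub>R x \<partial>lborel)"
      by (simp add: integral_minus)
    then have "(2::real) *\<^sub>R (\<integral>x. ball_density M (x::'a) *\<^sub>R x \<partial>lborel) = 0"
      by (simp add: scaleR_2 eq_neg_iff_add_eq_0)
    then show "(\<integral>x. ball_density M (x::'a) *\<^sub>R x \<partial>lborel) = (0::'a)" by simp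
  qed
qed

lemma ball_density_not_AE_zero:
  assumes M: "0 < M"
  shows "\<not> (AE y in lborel. (ball_density M :: 'a::euclidean_space \<Rightarrow> real) y = 0)"
proof
  assume "AE y in lborel. (ball_density M :: 'a \<Rightarrow> real) y = 0"
  then have "AE y in lborel. y \<notin> cball (0::'a) 1"
    using M measure_unit_ball_pos[where 'a='a] by (auto simp: ball_density_def indicator_def elim!: AE_mp)
  then have "emeasure lborel (cball (0::'a) 1) = 0"
    by (subst (asm) AE_iff_measurable[of "cball 0 1"]) auto
  moreover have "emeasure lborel (cball (0::'a) 1) = ennreal (measure lborel (cball (0::'a) 1))"
    using emeasure_lborel_cball_finite[of "0::'a" 1] by (intro emeasure_eq_ennreal_measure) simp
  ultimately show False using measure_unit_ball_pos[where 'a='a] by simp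
qed

lemma free_energy_riesz_energy:
  "free_energy s p m chi \<rho> = ereal (1 / (m - 1) * (\<integral>x. \<rho> x powr m \<partial>lborel))
     - ereal (chi / conj_exp p) * enn2ereal (riesz_energy s (conj_exp p) \<rho>)"
  by (simp add: free_energy_def riesz_energy_def)

lemma free_energy_riesz_energy_top:
  assumes "riesz_energy s (conj_exp p) \<rho> = top" "0 < chi" "1 < p"
  shows "free_energy s p m chi \<rho> = -\<infinity>"
proof -
  have "0 < chi / conj_exp p" using assms(2,3) by (simp add: conj_exp_def)
  then show ?thesis using assms(1) by (auto simp: free_energy_riesz_energy)
qed

lemma free_energy_riesz_energy_finite:
  assumes "riesz_energy s (conj_exp p) \<rho> = ennreal P" "0 \<le> P"
  shows "free_energy s p m chi \<rho> = ereal (1 / (m - 1) * (\<integral>x. \<rho> x powr m \<partial>lborel) - chi / conj_exp p * P)"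
  using assms by (simp add: free_energy_riesz_energy)

lemma integral_powr_nonneg: "0 \<le> (\<integral>x. (\<rho> :: 'a::euclidean_space \<Rightarrow> real) x powr m \<partial>lborel)"
  by (rule integral_nonneg_AE) simp

lemma Inf_free_energy_minf_if_top:
  fixes \<rho> :: "'a::euclidean_space \<Rightarrow> real"
  assumes "\<rho> \<in> adm_class m M" "riesz_energy s (conj_exp p) \<rho> = top" "0 < chi" "1 < p"
  shows "Inf (free_energy s p m chi ` (adm_class m M :: ('a \<Rightarrow> real) set)) = -\<infinity>"
  using INF_lower[OF assms(1), of "free_energy s p m chi"] free_energy_riesz_energy_top[OF assms(2-4)]
  by simp

lemma free_energy_mass_dilate:
  fixes \<rho> :: "'a::euclidean_space \<Rightarrow> real"
  assumes p: "1 < p" and sp: "0 < s * p" "s * p < real DIM('a)"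
    and nn: "\<And>x. 0 \<le> \<rho> x" and [measurable]: "\<rho> \<in> borel_measurable borel"
    and P: "riesz_energy s (conj_exp p) \<rho> = ennreal P" "0 \<le> P" and c: "0 < c"
  shows "free_energy s p m chi (mass_dilate c \<rho>) =
    ereal (c powr (real DIM('a) * (m - 1)) * (1 / (m - 1) * (\<integral>x. \<rho> x powr m \<partial>lborel))
        - c powr (real DIM('a) * (crit_exp DIM('a) s p - 1)) * (chi / conj_exp p * P))"
proof -
  note s = exponent_bounds(1,2)[OF p sp] and q = exponent_bounds(3)[OF p sp]
  have "riesz_energy s (conj_exp p) (mass_dilate c \<rho>)
      = ennreal (c powr (real DIM('a) * (crit_exp DIM('a) s p - 1)) * P)"
    using riesz_energy_mass_dilate[OF s c, of "conj_exp p" \<rho>] q P c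
    by (simp add: crit_exp_scaling ennreal_mult)
  then have "free_energy s p m chi (mass_dilate c \<rho>) = ereal (1 / (m - 1) * (\<integral>x. mass_dilate c \<rho> x powr m \<partial>lborel)
        - chi / conj_exp p * (c powr (real DIM('a) * (crit_exp DIM('a) s p - 1)) * P))"
    using P by (intro free_energy_riesz_energy_finite) auto
  then show ?thesis by (simp only: integral_powr_mass_dilate[OF nn c] mult_ac)
qed

lemma Inf_free_energy_le_mass_dilate:
  fixes \<rho> :: "'a::euclidean_space \<Rightarrow> real"
  assumes p: "1 < p" and sp: "0 < s * p" "s * p < real DIM('a)"
    and \<rho>: "\<rho> \<in> adm_class m M" and P: "riesz_energy s (conj_exp p) \<rho> = ennreal P" "0 \<le> P" and c: "0 < c"
  shows "Inf (free_energy s p m chi ` (adm_class m M :: ('a \<Rightarrow> real) set))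
    \<le> ereal (c powr (real DIM('a) * (m - 1)) * (1 / (m - 1) * (\<integral>x. \<rho> x powr m \<partial>lborel))
        - c powr (real DIM('a) * (crit_exp DIM('a) s p - 1)) * (chi / conj_exp p * P))"
  using INF_lower[OF adm_class_mass_dilate[OF \<rho> c], of "free_energy s p m chi"]
    free_energy_mass_dilate[OF p sp adm_classD(1,3)[OF \<rho>] P c]
  by simp

text \<open>At the critical exponent both terms of the free energy have the same scaling.\<close>

lemma Inf_free_energy_le_mass_dilate_crit:
  fixes \<rho> :: "'a::euclidean_space \<Rightarrow> real"
  assumes p: "1 < p" and sp: "0 < s * p" "s * p < real DIM('a)" and m: "m = crit_exp DIM('a) s p"
    and chi: "0 < chi" and \<rho>: "\<rho> \<in> adm_class m M" and F: "free_energy s p m chi \<rho> = ereal f"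
    and c: "0 < c"
  shows "Inf (free_energy s p m chi ` (adm_class m M :: ('a \<Rightarrow> real) set)) \<le> ereal (c powr (real DIM('a) * (m - 1)) * f)"
proof -
  have "riesz_energy s (conj_exp p) \<rho> \<noteq> top"
    using F free_energy_riesz_energy_top[OF _ chi p, where \<rho>=\<rho>] by auto
  then obtain P where P: "riesz_energy s (conj_exp p) \<rho> = ennreal P" "0 \<le> P"
    by (cases "riesz_energy s (conj_exp p) \<rho>") auto
  have "f = 1 / (m - 1) * (\<integral>x. \<rho> x powr m \<partial>lborel) - chi / conj_exp p * P"
    using F free_energy_riesz_energy_finite[OF P] by simp
  then show ?thesis
    using Inf_free_energy_le_mass_dilate[OF p sp \<rho> P c] crit_exp_gt_one[OF p sp] m
    by (simp add: right_diff_distrib)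
qed

lemma ball_density_free_energy_cases:
  fixes p s m chi M :: real
  assumes p: "1 < p" and sp: "0 < s * p" "s * p < real DIM('a::euclidean_space)"
    and m: "1 < m" and chi: "0 < chi" and M: "0 < M"
  obtains "Inf (free_energy s p m chi ` (adm_class m M :: ('a \<Rightarrow> real) set)) = -\<infinity>"
  | X P where "0 \<le> X" "0 < P" "\<And>c. 0 < c \<Longrightarrow> Inf (free_energy s p m chi ` (adm_class m M :: ('a \<Rightarrow> real) set))
      \<le> ereal (c powr (real DIM('a) * (m - 1)) * X - c powr (real DIM('a) * (crit_exp DIM('a) s p - 1)) * P)"
proof -
  define r where "r = (ball_density M :: 'a \<Rightarrow> real)"
  have r: "r \<in> adm_class m M" unfolding r_def by (rule ball_density_adm_class[OF M m])
  have pos: "0 < riesz_energy s (conj_exp p) r"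
    unfolding r_def using exponent_bounds(1,2)[OF p sp] adm_classD(1,3)[OF r[unfolded r_def]]
    by (intro riesz_energy_pos ball_density_not_AE_zero[OF M])
  show ?thesis
  proof (cases "riesz_energy s (conj_exp p) r")
    case (real P)
    then have "0 < chi / conj_exp p * P" "0 \<le> 1 / (m - 1) * (\<integral>x. r x powr m \<partial>lborel)"
      using pos chi m exponent_bounds(3)[OF p sp] integral_powr_nonneg by auto
    then show ?thesis
      using that(2) Inf_free_energy_le_mass_dilate[OF p sp r real(2,1)] real by auto
  next
    case top
    then show ?thesis using that(1) Inf_free_energy_minf_if_top[OF r _ chi p] by simp
  qed
qed

section \<open>Non-critical exponents\<close>

lemma Inf_free_energy_subcritical:
  fixes p s m chi M :: real
  assumes p: "1 < p" and sp: "0 < s * p" "s * p < real DIM('a::euclidean_space)"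
    and m: "1 < m" "m < crit_exp DIM('a) s p" and chi: "0 < chi" and M: "0 < M"
  shows "Inf (free_energy s p m chi ` (adm_class m M :: ('a \<Rightarrow> real) set)) = -\<infinity>"
proof (cases rule: ball_density_free_energy_cases[OF p sp m(1) chi M])
  case (2 X P)
  show ?thesis
  proof (rule ereal_bot)
    fix B :: real
    have "0 < real DIM('a) * (m - 1)" "real DIM('a) * (m - 1) < real DIM('a) * (crit_exp DIM('a) s p - 1)"
      using m by auto
    from powr_diff_unbounded_below[OF this 2(1,2)]
    obtain c where "0 < c"
      "c powr (real DIM('a) * (m - 1)) * X - c powr (real DIM('a) * (crit_exp DIM('a) s p - 1)) * P < B"
      by blast
    then show "Inf (free_energy s p m chi ` (adm_class m M :: ('a \<Rightarrow> real) set)) \<le> ereal B"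
      using 2(3) by (meson ereal_less_eq(3) less_imp_le order_trans)
  qed
qed

lemma Inf_free_energy_supercritical_neg:
  fixes p s m chi M :: real
  assumes p: "1 < p" and sp: "0 < s * p" "s * p < real DIM('a::euclidean_space)"
    and m: "1 < m" "crit_exp DIM('a) s p < m" and chi: "0 < chi" and M: "0 < M"
  shows "Inf (free_energy s p m chi ` (adm_class m M :: ('a \<Rightarrow> real) set)) < 0"
proof (cases rule: ball_density_free_energy_cases[OF p sp m(1) chi M])
  case (2 X P)
  have "0 < real DIM('a) * (crit_exp DIM('a) s p - 1)" "real DIM('a) * (crit_exp DIM('a) s p - 1) < real DIM('a) * (m - 1)"
    using crit_exp_gt_one[OF p sp] m by auto
  from powr_diff_neg_exists[OF this 2(1,2)]
  obtain c where "0 < c"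
    "c powr (real DIM('a) * (m - 1)) * X - c powr (real DIM('a) * (crit_exp DIM('a) s p - 1)) * P < 0"
    by blast
  then show ?thesis by (intro order.strict_trans1[OF 2(3)]) simp_all
qed simp

text \<open>Choosing \<open>t\<close> and \<open>m\<^sub>1\<close> as in \<open>Young_exponents_exist\<close> makes the power \<open>\<beta>\<close> of \<open>\<integral>\<rho>\<^sup>m\<close> in Young's
  bound smaller than one; this is where \<open>m > m\<^sub>c\<close> enters.\<close>

lemma riesz_energy_sublinear_bound:
  fixes p s m M :: real
  assumes p: "1 < p" and sp: "0 < s * p" "s * p < real DIM('a::euclidean_space)"
    and m: "1 < m" "crit_exp DIM('a) s p < m" and M: "0 < M"
  obtains A B \<beta> where "0 \<le> A" "0 \<le> B" "0 < \<beta>" "\<beta> < 1"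
    "\<And>\<rho>. \<rho> \<in> (adm_class m M :: ('a \<Rightarrow> real) set)
      \<Longrightarrow> riesz_energy s (conj_exp p) \<rho> \<le> ennreal (A * (\<integral>x. \<rho> x powr m \<partial>lborel) powr \<beta> + B)"
proof -
  define N where "N = real DIM('a)"
  define q where "q = conj_exp p"
  note s = exponent_bounds(1,2)[OF p sp] and q = exponent_bounds(3,4)[OF p sp, folded q_def]
  obtain t m1 where tm: "1 < t" "t < q" "1 < m1" "m1 < q" "m1 < m" "1/t + 1/m1 = 1 + 1/q"
     "(N - s) * t < N" "(m1 - 1)/(m - 1) * (q/m1) < 1"
    using Young_exponents_exist[of N s q m] s q m by (auto simp: N_def q_def crit_exp_def)
  obtain A0 B0 where AB: "0 \<le> A0" "0 \<le> B0"
    and bound: "\<And>(\<rho> :: 'a \<Rightarrow> real) M0 E0. \<rho> \<in> borel_measurable borel \<Longrightarrow> (\<And>y. 0 \<le> \<rho> y)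
      \<Longrightarrow> (\<integral>\<^sup>+y. ennreal (\<rho> y) \<partial>lborel) = ennreal M0 \<Longrightarrow> 0 \<le> M0
      \<Longrightarrow> (\<integral>\<^sup>+y. ennreal (\<rho> y powr m) \<partial>lborel) = ennreal E0 \<Longrightarrow> 0 \<le> E0
      \<Longrightarrow> riesz_energy s q \<rho> \<le> ennreal (A0 * M0 powr ((1 - (m1 - 1)/(m - 1)) * (q/m1))
            * E0 powr ((m1 - 1)/(m - 1) * (q/m1)) + B0 * M0 powr q)"
    using riesz_energy_Young_bound[OF s q(1) _ tm(1,2) _ tm(3,4,5,6)] q tm(7) unfolding N_def by blast
  show ?thesis
  proof (rule that[of "A0 * M powr ((1 - (m1 - 1)/(m - 1)) * (q/m1))" "B0 * M powr q"])
    fix \<rho> :: "'a \<Rightarrow> real" assume \<rho>: "\<rho> \<in> adm_class m M"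
    note D = adm_classD[OF \<rho>]
    show "riesz_energy s (conj_exp p) \<rho> \<le> ennreal (A0 * M powr ((1 - (m1 - 1)/(m - 1)) * (q/m1))
        * (\<integral>x. \<rho> x powr m \<partial>lborel) powr ((m1 - 1)/(m - 1) * (q/m1)) + B0 * M powr q)"
      unfolding q_def[symmetric]
      using D M by (intro bound) (auto simp: nn_integral_eq_integral integral_powr_nonneg)
  qed (use AB tm m in auto)
qed

lemma Inf_free_energy_supercritical_bounded:
  fixes p s m chi M :: real
  assumes p: "1 < p" and sp: "0 < s * p" "s * p < real DIM('a::euclidean_space)"
    and m: "1 < m" "crit_exp DIM('a) s p < m" and chi: "0 < chi" and M: "0 < M"
  shows "-\<infinity> < Inf (free_energy s p m chi ` (adm_class m M :: ('a \<Rightarrow> real) set))"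
proof -
  define q where "q = conj_exp p"
  have cq: "0 < chi / q" using exponent_bounds(3)[OF p sp] chi by (simp add: q_def)
  obtain A B \<beta> where AB: "0 \<le> A" "0 \<le> B" "0 < \<beta>" "\<beta> < 1"
    and bound: "\<And>\<rho>. \<rho> \<in> (adm_class m M :: ('a \<Rightarrow> real) set)
      \<Longrightarrow> riesz_energy s q \<rho> \<le> ennreal (A * (\<integral>x. \<rho> x powr m \<partial>lborel) powr \<beta> + B)"
    using riesz_energy_sublinear_bound[OF p sp m M] unfolding q_def by blast
  obtain C where C: "\<And>E. 0 \<le> E \<Longrightarrow> chi / q * A * E powr \<beta> \<le> 1 / (m - 1) * E + C"
    using powr_le_linear_plus_const[of "chi / q * A" "1 / (m - 1)" \<beta>] cq AB m by (metis divide_pos_pos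
      less_eq_real_def mult_nonneg_nonneg zero_less_one diff_gt_0_iff_gt)
  have "ereal (- C - chi / q * B) \<le> free_energy s p m chi \<rho>"
    if \<rho>: "\<rho> \<in> (adm_class m M :: ('a \<Rightarrow> real) set)" for \<rho>
  proof -
    define E where "E = (\<integral>x. \<rho> x powr m \<partial>lborel)"
    have E: "0 \<le> E" unfolding E_def by (rule integral_powr_nonneg)
    have AEB: "0 \<le> A * E powr \<beta> + B" using AB by simp
    obtain P where P: "riesz_energy s q \<rho> = ennreal P" "0 \<le> P" "P \<le> A * E powr \<beta> + B"
      using bound[OF \<rho>] unfolding E_def[symmetric]
      by (cases "riesz_energy s q \<rho>") (auto simp: top_unique ennreal_le_iff[OF AEB])
    have "free_energy s p m chi \<rho> = ereal (1 / (m - 1) * E - chi / q * P)"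
      unfolding E_def q_def by (rule free_energy_riesz_energy_finite[OF P(1,2)[unfolded q_def]])
    moreover have "chi / q * P \<le> chi / q * A * E powr \<beta> + chi / q * B"
      using mult_left_mono[OF P(3), of "chi / q"] cq by (simp add: algebra_simps)
    ultimately show ?thesis using C[OF E] by simp
  qed
  then have "ereal (- C - chi / q * B) \<le> Inf (free_energy s p m chi ` (adm_class m M :: ('a \<Rightarrow> real) set))"
    by (intro INF_greatest)
  then show ?thesis by (metis MInfty_neq_ereal(1) ereal_infty_less(2) order_less_le_trans)
qed

section \<open>The critical exponent\<close>

definition HLS_numerator :: "real \<Rightarrow> real \<Rightarrow> ('a::euclidean_space \<Rightarrow> real) \<Rightarrow> ennreal" where
  "HLS_numerator s q h = (\<integral>\<^sup>+x. ennreal (\<bar>riesz_conv s h x\<bar> powr q) \<partial>lborel)"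

definition HLS_denominator :: "real \<Rightarrow> real \<Rightarrow> ('a::euclidean_space \<Rightarrow> real) \<Rightarrow> real" where
  "HLS_denominator e m h = (\<integral>x. \<bar>h x\<bar> \<partial>lborel) powr e * (\<integral>x. \<bar>h x\<bar> powr m \<partial>lborel)"

definition HLS_domain :: "real \<Rightarrow> ('a::euclidean_space \<Rightarrow> real) set" where
  "HLS_domain m = {h. in_Lq 1 h \<and> in_Lq m h \<and> \<not> (AE x in lborel. h x = 0)}"

lemma Lq_norm_one: "Lq_norm 1 (h :: 'a::euclidean_space \<Rightarrow> real) = (\<integral>x. \<bar>h x\<bar> \<partial>lborel)"
proof -
  have "(\<lambda>x. \<bar>h x\<bar> powr 1) = (\<lambda>x. \<bar>h x\<bar>)" by (auto simp: powr_one_gt_zero_iff)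
  moreover have "0 \<le> (\<integral>x. \<bar>h x\<bar> \<partial>lborel)" by (rule integral_nonneg_AE) simp
  ultimately show ?thesis by (simp add: Lq_norm_def)
qed

lemma Lq_norm_powr:
  assumes "0 < m"
  shows "Lq_norm m (h :: 'a::euclidean_space \<Rightarrow> real) powr m = (\<integral>x. \<bar>h x\<bar> powr m \<partial>lborel)"
proof -
  have "0 \<le> (\<integral>x. \<bar>h x\<bar> powr m \<partial>lborel)" by (rule integral_nonneg_AE) simp
  then show ?thesis using assms by (simp add: Lq_norm_def powr_powr)
qed

lemma theta0_crit:
  assumes p: "1 < p" and sp: "0 < s * p" "s * p < real DIM('a::euclidean_space)"
    and m: "m = crit_exp DIM('a) s p"
  shows "conj_exp p * (1 - theta0 DIM('a) s p m) = m"
    "conj_exp p * theta0 DIM('a) s p m = s * conj_exp p / real DIM('a)"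
proof -
  note q = exponent_bounds(3)[OF p sp]
  have m1: "1 < m" using crit_exp_gt_one[OF p sp] m by simp
  have sob: "sob_exp DIM('a) s p = conj_exp p / (m - 1)"
  proof -
    have "sob_exp DIM('a) s p / conj_exp p = 1 / (m - 1)" using sob_exp_div_conj_exp[OF p sp] m by simp
    then show ?thesis using q m1 by (simp add: field_simps)
  qed
  show e1: "conj_exp p * (1 - theta0 DIM('a) s p m) = m"
    using m1 q by (simp add: theta0_def sob conj_exp_def[of m] field_simps)
  show "conj_exp p * theta0 DIM('a) s p m = s * conj_exp p / real DIM('a)"
  proof -
    have "conj_exp p * theta0 DIM('a) s p m = conj_exp p - conj_exp p * (1 - theta0 DIM('a) s p m)"
      by (simp add: algebra_simps)
    also have "\<dots> = conj_exp p - m" using e1 by simp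
    also have "\<dots> = s * conj_exp p / real DIM('a)" using m by (simp add: crit_exp_def)
    finally show ?thesis .
  qed
qed

lemma HLS_const_crit_eq:
  assumes p: "1 < p" and sp: "0 < s * p" "s * p < real DIM('a::euclidean_space)"
    and m: "m = crit_exp DIM('a) s p"
  shows "HLS_const TYPE('a) p m s
     = Sup ((\<lambda>h. enn2ereal (HLS_numerator s (conj_exp p) h) / ereal (HLS_denominator (s * conj_exp p / real DIM('a)) m h)) ` (HLS_domain m :: ('a \<Rightarrow> real) set))"
proof -
  note th = theta0_crit[OF p sp m]
  have m0: "0 < m" using crit_exp_gt_one[OF p sp] m by simp
  show ?thesis
    unfolding HLS_const_def Let_def HLS_domain_def HLS_numerator_def HLS_denominator_def
    by (intro arg_cong[where f=Sup] image_cong refl)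
       (simp add: Lq_norm_one mult.commute[of "conj_exp p" "1 - _"] mult.commute[of "conj_exp p" "theta0 _ _ _ _"]
          th[unfolded mult.commute[of "conj_exp p"]] powr_powr[symmetric] Lq_norm_powr[OF m0])
qed

lemma enn2ereal_divide_le_imp:
  assumes "0 < d" "enn2ereal X / ereal d \<le> ereal r"
  shows "X \<le> ennreal (r * d)"
proof -
  have "enn2ereal X \<le> ereal r * ereal d"
    using assms by (subst (asm) ereal_divide_le_pos) (auto simp: mult.commute)
  then have le: "enn2ereal X \<le> ereal (r * d)" by simp
  have z: "0 \<le> enn2ereal X" by simp
  have "ereal 0 \<le> ereal (r * d)" using order_trans[OF z le] by simp
  then have rd: "0 \<le> r * d" by simp
  then have "enn2ereal X \<le> enn2ereal (ennreal (r * d))"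
    using le by (simp add: enn2ereal_ennreal)
  then show ?thesis by (simp add: less_eq_ennreal.rep_eq)
qed

lemma less_enn2ereal_divide_imp:
  assumes d: "0 < d" and T: "0 \<le> T" and lt: "ereal T < enn2ereal X / ereal d"
  shows "ennreal (T * d) < X"
proof -
  have "ereal d * ereal T < enn2ereal X"
    using lt d by (subst (asm) ereal_less_divide_pos) auto
  then have "enn2ereal (ennreal (T * d)) < enn2ereal X"
    using d T by (simp add: enn2ereal_ennreal mult.commute)
  then show ?thesis by (simp add: less_ennreal.rep_eq)
qed

lemma HLS_denominator_pos:
  assumes h: "h \<in> HLS_domain m" and m: "0 < m"
  shows "0 < HLS_denominator e m (h :: 'a::euclidean_space \<Rightarrow> real)"
proof -
  have i1: "integrable lborel (\<lambda>x. \<bar>h x\<bar>)" and im: "integrable lborel (\<lambda>x. \<bar>h x\<bar> powr m)"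
    and nz: "\<not> (AE x in lborel. h x = 0)" and [measurable]: "h \<in> borel_measurable borel"
    using h by (auto simp: HLS_domain_def in_Lq_def powr_one_gt_zero_iff)
  have "(\<integral>x. \<bar>h x\<bar> \<partial>lborel) \<noteq> 0"
  proof
    assume "(\<integral>x. \<bar>h x\<bar> \<partial>lborel) = 0"
    then have "AE x in lborel. \<bar>h x\<bar> = 0" using i1 by (subst (asm) integral_nonneg_eq_0_iff_AE) auto
    then show False using nz by simp
  qed
  moreover have "0 \<le> (\<integral>x. \<bar>h x\<bar> \<partial>lborel)" by (rule integral_nonneg_AE) simp
  moreover have "(\<integral>x. \<bar>h x\<bar> powr m \<partial>lborel) \<noteq> 0"
  proof
    assume "(\<integral>x. \<bar>h x\<bar> powr m \<partial>lborel) = 0"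
    then have "AE x in lborel. \<bar>h x\<bar> powr m = 0" using im by (subst (asm) integral_nonneg_eq_0_iff_AE) auto
    then show False using nz by simp
  qed
  moreover have "0 \<le> (\<integral>x. \<bar>h x\<bar> powr m \<partial>lborel)" by (rule integral_nonneg_AE) simp
  ultimately show ?thesis unfolding HLS_denominator_def by (simp add: less_le)
qed

lemma ereal_divide_pos: "0 < (a::ereal) \<Longrightarrow> 0 < d \<Longrightarrow> 0 < a / ereal d"
  by (cases a) auto

lemma in_Lq_bounded:
  fixes g \<rho> :: "'a::euclidean_space \<Rightarrow> real"
  assumes [measurable]: "g \<in> borel_measurable borel" and g: "\<And>y. 0 \<le> g y" "\<And>y. g y \<le> \<rho> y"
    and i: "integrable lborel (\<lambda>x. \<rho> x powr m)" and m: "0 < m"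
  shows "in_Lq m g" "(\<integral>x. g x powr m \<partial>lborel) \<le> (\<integral>x. \<rho> x powr m \<partial>lborel)"
proof -
  have le: "g x powr m \<le> \<rho> x powr m" for x using g[of x] m by (intro powr_mono2) auto
  have ig: "integrable lborel (\<lambda>x. g x powr m)"
    by (rule Bochner_Integration.integrable_bound[OF i]) (use le in auto)
  then show "in_Lq m g" using g by (simp add: in_Lq_def)
  show "(\<integral>x. g x powr m \<partial>lborel) \<le> (\<integral>x. \<rho> x powr m \<partial>lborel)"
    using ig i le by (intro integral_mono) auto
qed

lemma HLS_denominator_mono:
  fixes g h :: "'a::euclidean_space \<Rightarrow> real"
  assumes [measurable]: "g \<in> borel_measurable borel" and g: "\<And>y. 0 \<le> g y" "\<And>y. g y \<le> \<bar>h y\<bar>"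
    and h: "integrable lborel h" "integrable lborel (\<lambda>x. \<bar>h x\<bar> powr m)" and e: "0 \<le> e" and m: "0 < m"
  shows "HLS_denominator e m g \<le> HLS_denominator e m h"
proof -
  have "integrable lborel g"
    by (rule Bochner_Integration.integrable_bound[OF integrable_abs[OF h(1)]]) (use g in auto)
  then have "(\<integral>x. \<bar>g x\<bar> \<partial>lborel) \<le> (\<integral>x. \<bar>h x\<bar> \<partial>lborel)"
    using g h(1) by (intro integral_mono) auto
  moreover have "(\<integral>x. \<bar>g x\<bar> powr m \<partial>lborel) \<le> (\<integral>x. \<bar>h x\<bar> powr m \<partial>lborel)"
    using in_Lq_bounded(2)[OF _ g h(2) m] g by simp
  ultimately show ?thesis
    unfolding HLS_denominator_def using e
    by (intro mult_mono powr_mono2) (auto intro: integral_nonneg_AE)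
qed

lemma HLS_numerator_eq_riesz_energy:
  fixes \<rho> :: "'a::euclidean_space \<Rightarrow> real"
  assumes s: "0 < s" "s < real DIM('a)" and [measurable]: "\<rho> \<in> borel_measurable borel"
    and nn: "\<And>y. 0 \<le> \<rho> y" and bnd: "\<And>y. \<rho> y \<le> B * indicator (cball 0 R) y" and B: "0 \<le> B"
  shows "HLS_numerator s q \<rho> = riesz_energy s q \<rho>"
  unfolding HLS_numerator_def riesz_energy_def
  by (intro nn_integral_cong ennreal_abs_riesz_conv_powr_eq[OF s _ nn]
      riesz_conv_nn_finite_if_bounded[OF s _ nn bnd B]) simp_all

lemma HLS_const_pos:
  assumes p: "1 < p" and sp: "0 < s * p" "s * p < real DIM('a::euclidean_space)"
    and m: "m = crit_exp DIM('a) s p"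
  shows "0 < HLS_const TYPE('a) p m s"
proof -
  note s = exponent_bounds(1,2)[OF p sp]
  have m1: "1 < m" using crit_exp_gt_one[OF p sp] m by simp
  define r where "r = (ball_density 1 :: 'a \<Rightarrow> real)"
  have rY: "r \<in> adm_class m 1" unfolding r_def by (rule ball_density_adm_class) (use m1 in auto)
  note D = adm_classD[OF rY]
  have nz: "\<not> (AE y in lborel. r y = 0)" unfolding r_def by (rule ball_density_not_AE_zero) simp
  have rH: "r \<in> HLS_domain m"
    using D nz by (simp add: HLS_domain_def in_Lq_def)
  have "HLS_numerator s (conj_exp p) r = riesz_energy s (conj_exp p) r"
    using measure_unit_ball_pos[where 'a='a]
    by (intro HLS_numerator_eq_riesz_energy[OF s D(3) D(1), of "1 / measure lborel (cball (0::'a) 1)" 1])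
       (simp_all add: r_def ball_density_def)
  also have "0 < riesz_energy s (conj_exp p) r" by (rule riesz_energy_pos[OF s D(3) D(1) nz])
  finally have "0 < enn2ereal (HLS_numerator s (conj_exp p) r)"
    by (metis zero_ennreal.rep_eq less_ennreal.rep_eq)
  then have "0 < enn2ereal (HLS_numerator s (conj_exp p) r) / ereal (HLS_denominator (s * conj_exp p / real DIM('a)) m r)"
    using HLS_denominator_pos[OF rH] m1 by (intro ereal_divide_pos) auto
  also have "\<dots> \<le> HLS_const TYPE('a) p m s"
    unfolding HLS_const_crit_eq[OF p sp m] using rH by (intro Sup_upper imageI)
  finally show ?thesis .
qed

lemma riesz_energy_le_HLS_const:
  fixes g :: "'a::euclidean_space \<Rightarrow> real"
  assumes p: "1 < p" and sp: "0 < s * p" "s * p < real DIM('a)"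
    and m: "m = crit_exp DIM('a) s p" and H: "HLS_const TYPE('a) p m s = ereal r"
    and [measurable]: "g \<in> borel_measurable borel" and nn: "\<And>y. 0 \<le> g y"
    and bnd: "\<And>y. g y \<le> B * indicator (cball 0 R) y" and B: "0 \<le> B"
    and int: "integrable lborel g" "integrable lborel (\<lambda>x. g x powr m)"
  shows "riesz_energy s (conj_exp p) g \<le> ennreal (r * HLS_denominator (s * conj_exp p / real DIM('a)) m g)"
proof (cases "AE y in lborel. g y = 0")
  case True
  then show ?thesis using riesz_energy_AE_zero[of g] by simp
next
  case False
  note s = exponent_bounds(1,2)[OF p sp]
  have m0: "0 < m" using crit_exp_gt_one[OF p sp] m by simp
  have gH: "g \<in> HLS_domain m" using int nn False by (simp add: HLS_domain_def in_Lq_def)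
  have "enn2ereal (HLS_numerator s (conj_exp p) g) / ereal (HLS_denominator (s * conj_exp p / real DIM('a)) m g)
      \<le> HLS_const TYPE('a) p m s"
    unfolding HLS_const_crit_eq[OF p sp m] using gH by (intro Sup_upper imageI)
  then show ?thesis
    using enn2ereal_divide_le_imp[OF HLS_denominator_pos[OF gH m0]] H HLS_numerator_eq_riesz_energy[OF s _ nn bnd B]
    by simp
qed

text \<open>The HLS quotient is only known to dominate the energy of bounded, compactly supported
  densities; general densities are reached by monotone truncation.\<close>

lemma riesz_energy_HLS_bound:
  fixes \<rho> :: "'a::euclidean_space \<Rightarrow> real"
  assumes p: "1 < p" and sp: "0 < s * p" "s * p < real DIM('a)"
    and m: "m = crit_exp DIM('a) s p" and H: "HLS_const TYPE('a) p m s = ereal r"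
    and nn: "\<And>x. 0 \<le> \<rho> x" and [measurable]: "\<rho> \<in> borel_measurable borel"
    and i1: "integrable lborel \<rho>" and im: "integrable lborel (\<lambda>x. \<rho> x powr m)"
  shows "riesz_energy s (conj_exp p) \<rho>
    \<le> ennreal (r * ((\<integral>x. \<rho> x \<partial>lborel) powr (s * conj_exp p / real DIM('a)) * (\<integral>x. \<rho> x powr m \<partial>lborel)))"
proof -
  note s = exponent_bounds(1,2)[OF p sp] and q = exponent_bounds(3)[OF p sp]
  define e where "e = s * conj_exp p / real DIM('a)"
  have e: "0 \<le> e" using s q by (simp add: e_def)
  have m0: "0 < m" using crit_exp_gt_one[OF p sp] m by simp
  have r: "0 < r" using HLS_const_pos[OF p sp m] H by simp
  define \<sigma> where "\<sigma> n y = min (\<rho> y) (real n) * indicator (cball 0 (real n)) y" for n y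
  have [measurable]: "\<sigma> n \<in> borel_measurable borel" for n unfolding \<sigma>_def by measurable
  have \<sigma>: "0 \<le> \<sigma> n y" "\<sigma> n y \<le> \<rho> y" "\<sigma> n y \<le> \<sigma> (Suc n) y" "\<sigma> n y \<le> real n * indicator (cball 0 (real n)) y"
    for n y using nn[of y] by (auto simp: \<sigma>_def indicator_def)
  have \<sigma>_eventually: "\<exists>n. \<sigma> n y = \<rho> y" for y
  proof -
    obtain n where "max (\<rho> y) (norm y) \<le> real n" using real_arch_simple by blast
    then show ?thesis by (intro exI[of _ n]) (auto simp: \<sigma>_def indicator_def min_def)
  qed
  have bound: "riesz_energy s (conj_exp p) (\<sigma> n) \<le> ennreal (r * HLS_denominator e m \<rho>)" for n
  proof -
    have "integrable lborel (\<sigma> n)"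
      by (rule Bochner_Integration.integrable_bound[OF i1]) (use \<sigma> nn in auto)
    moreover have "integrable lborel (\<lambda>x. \<sigma> n x powr m)"
      using in_Lq_bounded(1)[of "\<sigma> n" \<rho>, OF _ \<sigma>(1,2) im m0] \<sigma>(1) by (simp add: in_Lq_def)
    ultimately have "riesz_energy s (conj_exp p) (\<sigma> n) \<le> ennreal (r * HLS_denominator e m (\<sigma> n))"
      unfolding e_def by (intro riesz_energy_le_HLS_const[OF p sp m H _ \<sigma>(1) \<sigma>(4)]) simp_all
    also have "\<dots> \<le> ennreal (r * HLS_denominator e m \<rho>)"
      using r e m0 nn i1 im
      by (intro ennreal_leI mult_left_mono HLS_denominator_mono) (auto intro: \<sigma>(1) order_trans[OF \<sigma>(2)])
    finally show ?thesis .
  qed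
  have "riesz_energy s (conj_exp p) \<rho> \<le> (SUP n. riesz_energy s (conj_exp p) (\<sigma> n))"
    using s q \<sigma> \<sigma>_eventually by (intro riesz_energy_le_SUP) simp_all
  also have "\<dots> \<le> ennreal (r * HLS_denominator e m \<rho>)"
    by (rule SUP_least) (rule bound)
  finally show ?thesis
    using nn unfolding e_def HLS_denominator_def by simp
qed

text \<open>If \<open>H\<^sup>* = \<infinity>\<close> then \<open>M\<^sub>c = 0\<close>, because \<open>real_of_ereal \<infinity> = 0\<close> and \<open>x / 0 = 0\<close>.\<close>

lemma le_crit_mass_iff:
  assumes p: "1 < p" and sp: "0 < s * p" "s * p < real DIM('a::euclidean_space)"
    and m: "m = crit_exp DIM('a) s p" and chi: "0 < chi" and M: "0 < M"
  shows "M \<le> crit_mass TYPE('a) p s chi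
    \<longleftrightarrow> HLS_const TYPE('a) p m s \<le> ereal (sob_exp DIM('a) s p / (chi * M powr (s * conj_exp p / real DIM('a))))"
proof -
  define e where "e = s * conj_exp p / real DIM('a)"
  define sob where "sob = sob_exp DIM('a) s p"
  have e: "0 < e" using exponent_bounds(1,3)[OF p sp] by (simp add: e_def)
  have sob: "0 < sob" using sob_exp_pos[OF p sp] by (simp add: sob_def)
  have Mc: "crit_mass TYPE('a) p s chi = (sob / (chi * real_of_ereal (HLS_const TYPE('a) p m s))) powr (1 / e)"
    by (simp add: crit_mass_def Let_def m e_def sob_def)
  have "0 < HLS_const TYPE('a) p m s" by (rule HLS_const_pos[OF p sp m])
  then consider r where "HLS_const TYPE('a) p m s = ereal r" "0 < r" | "HLS_const TYPE('a) p m s = \<infinity>"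
    by (cases "HLS_const TYPE('a) p m s") auto
  then show ?thesis
  proof cases
    case (1 r)
    have "M \<le> (sob / (chi * r)) powr (1 / e) \<longleftrightarrow> M powr e \<le> sob / (chi * r)"
      using M e sob chi 1(2) powr_mono2[of e M "(sob / (chi * r)) powr (1 / e)"]
        powr_mono2[of "1 / e" "M powr e" "sob / (chi * r)"]
      by (auto simp: powr_powr)
    also have "\<dots> \<longleftrightarrow> r \<le> sob / (chi * M powr e)"
      using M chi 1(2) by (simp add: field_simps)
    finally show ?thesis using 1 by (simp add: Mc e_def sob_def)
  next
    case 2
    then show ?thesis using M e by (simp add: Mc)
  qed
qed

lemma free_energy_nonneg_crit:
  fixes \<rho> :: "'a::euclidean_space \<Rightarrow> real"
  assumes p: "1 < p" and sp: "0 < s * p" "s * p < real DIM('a)"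
    and m: "m = crit_exp DIM('a) s p" and chi: "0 < chi" and M: "0 < M"
    and MMc: "M \<le> crit_mass TYPE('a) p s chi" and \<rho>: "\<rho> \<in> adm_class m M"
  shows "0 \<le> free_energy s p m chi \<rho>"
proof -
  define q where "q = conj_exp p"
  define e where "e = s * q / real DIM('a)"
  define sob where "sob = sob_exp DIM('a) s p"
  define E where "E = (\<integral>x. \<rho> x powr m \<partial>lborel)"
  note D = adm_classD[OF \<rho>]
  have q: "1 < q" using exponent_bounds(3)[OF p sp] by (simp add: q_def)
  have E: "0 \<le> E" unfolding E_def by (rule integral_powr_nonneg)
  have sobq: "sob / q = 1 / (m - 1)" using sob_exp_div_conj_exp[OF p sp] m by (simp add: sob_def q_def)
  obtain r where H: "HLS_const TYPE('a) p m s = ereal r" and r: "r \<le> sob / (chi * M powr e)"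
    using le_crit_mass_iff[OF p sp m chi M] MMc HLS_const_pos[OF p sp m]
    by (cases "HLS_const TYPE('a) p m s") (auto simp: sob_def e_def q_def)
  have "r * (M powr e * E) \<le> sob / (chi * M powr e) * (M powr e * E)"
    using r M E by (intro mult_right_mono) auto
  also have "\<dots> = sob / chi * E" using M by simp
  finally have "riesz_energy s q \<rho> \<le> ennreal (sob / chi * E)"
    using riesz_energy_HLS_bound[OF p sp m H D(1) D(3) D(2) D(4)] D(5)
    by (simp add: E_def e_def q_def) (meson ennreal_leI order_trans)
  then obtain P where P: "riesz_energy s q \<rho> = ennreal P" "0 \<le> P" "P \<le> sob / chi * E"
    using sob_exp_pos[OF p sp] chi E
    by (cases "riesz_energy s q \<rho>") (auto simp: top_unique ennreal_le_iff sob_def)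
  have "chi / q * P \<le> chi / q * (sob / chi * E)"
    using P(3) chi q by (intro mult_left_mono) auto
  also have "\<dots> = sob / q * E" using chi by simp
  also have "\<dots> = 1 / (m - 1) * E" using sobq by simp
  finally show ?thesis
    using free_energy_riesz_energy_finite[OF P(1,2)[unfolded q_def]] by (simp add: E_def q_def)
qed

lemma Inf_free_energy_crit_le_crit_mass:
  fixes p s m chi M :: real
  assumes p: "1 < p" and sp: "0 < s * p" "s * p < real DIM('a::euclidean_space)"
    and m: "m = crit_exp DIM('a) s p" and chi: "0 < chi" and M: "0 < M"
    and MMc: "M \<le> crit_mass TYPE('a) p s chi"
  shows "Inf (free_energy s p m chi ` (adm_class m M :: ('a \<Rightarrow> real) set)) = 0"
proof (rule antisym)
  have m1: "1 < m" using crit_exp_gt_one[OF p sp] m by simp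
  define r where "r = (ball_density M :: 'a \<Rightarrow> real)"
  have r: "r \<in> adm_class m M" unfolding r_def by (rule ball_density_adm_class[OF M m1])
  have F0: "0 \<le> free_energy s p m chi r" by (rule free_energy_nonneg_crit[OF p sp m chi M MMc r])
  have "free_energy s p m chi r \<noteq> \<infinity>"
    by (cases "riesz_energy s (conj_exp p) r")
       (auto simp: free_energy_riesz_energy_top[OF _ chi p] free_energy_riesz_energy_finite)
  with F0 obtain f where f: "free_energy s p m chi r = ereal f" "0 \<le> f"
    by (cases "free_energy s p m chi r") auto
  define a where "a = real DIM('a) * (m - 1)"
  have a: "0 < a" using m1 by (simp add: a_def)
  show "Inf (free_energy s p m chi ` (adm_class m M :: ('a \<Rightarrow> real) set)) \<le> 0"
  proof (rule ereal_le_epsilon2)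
    fix \<epsilon> :: real assume \<epsilon>: "0 < \<epsilon>"
    define c where "c = (\<epsilon> / (f + 1)) powr (1 / a)"
    have c: "0 < c" "c powr a = \<epsilon> / (f + 1)" using \<epsilon> f a by (simp_all add: c_def powr_powr)
    have "c powr a * f \<le> c powr a * (f + 1)" by (intro mult_left_mono) auto
    also have "\<dots> = \<epsilon>" using c(2) f by simp
    finally have "c powr a * f \<le> \<epsilon>" .
    then show "Inf (free_energy s p m chi ` (adm_class m M :: ('a \<Rightarrow> real) set)) \<le> 0 + ereal \<epsilon>"
      using Inf_free_energy_le_mass_dilate_crit[OF p sp m chi r f(1) c(1)] unfolding a_def[symmetric]
      by (simp add: order_trans)
  qed
  show "0 \<le> Inf (free_energy s p m chi ` (adm_class m M :: ('a \<Rightarrow> real) set))"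
    by (rule INF_greatest) (rule free_energy_nonneg_crit[OF p sp m chi M MMc])
qed

lemma HLS_numerator_less_truncation:
  fixes h :: "'a::euclidean_space \<Rightarrow> real"
  assumes s: "0 < s" "s < real DIM('a)" and q: "0 < q" and m: "0 < m" and e: "0 \<le> e"
    and h: "h \<in> HLS_domain m" and lt: "X < HLS_numerator s q h"
  obtains g :: "'a \<Rightarrow> real" and R
  where "g \<in> borel_measurable borel" "\<And>y. 0 \<le> g y" "\<And>y. g y \<noteq> 0 \<Longrightarrow> norm y \<le> R"
    "integrable lborel g" "integrable lborel (\<lambda>x. g x powr m)" "0 < (\<integral>x. g x \<partial>lborel)"
    "X < riesz_energy s q g"
    "(\<integral>x. g x \<partial>lborel) powr e * (\<integral>x. g x powr m \<partial>lborel) \<le> HLS_denominator e m h"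
proof -
  have hm[measurable]: "h \<in> borel_measurable borel"
    and hi: "integrable lborel h" "integrable lborel (\<lambda>x. \<bar>h x\<bar> powr m)"
    using h by (auto simp: HLS_domain_def in_Lq_def integrable_abs_iff)
  define g where "g n y = \<bar>h y\<bar> * indicator (cball 0 (real n)) y" for n y
  have gm[measurable]: "g n \<in> borel_measurable borel" for n unfolding g_def by measurable
  have g: "0 \<le> g n y" "g n y \<le> \<bar>h y\<bar>" for n y by (auto simp: g_def indicator_def)
  have "X < riesz_energy s q (\<lambda>y. \<bar>h y\<bar>)"
    using lt unfolding HLS_numerator_def riesz_energy_def
    by (rule order.strict_trans2) (intro nn_integral_mono ennreal_abs_riesz_conv_powr_le[OF s _ q]; simp)
  also have "\<dots> \<le> (SUP n. riesz_energy s q (g n))"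
  proof (rule riesz_energy_le_SUP[OF s q])
    show "\<exists>n. g n y = \<bar>h y\<bar>" for y :: 'a
    proof -
      obtain n where "norm y \<le> real n" using real_arch_simple by blast
      then show ?thesis by (intro exI[of _ n]) (auto simp: g_def indicator_def)
    qed
  qed (auto simp: g_def indicator_def)
  finally obtain n where n: "X < riesz_energy s q (g n)" by (auto simp: less_SUP_iff)
  have gi: "integrable lborel (g n)"
    by (rule Bochner_Integration.integrable_bound[OF integrable_abs[OF hi(1)]]) (use g in auto)
  have "\<not> (AE y in lborel. g n y = 0)"
    using n riesz_energy_AE_zero[of "g n" s q] by auto
  then have "0 < (\<integral>x. g n x \<partial>lborel)"
    using gi g by (subst less_le) (auto simp: integral_nonneg_AE integral_nonneg_eq_0_iff_AE)
  moreover have "integrable lborel (\<lambda>x. g n x powr m)"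
    using in_Lq_bounded(1)[of "g n", OF _ g hi(2)] m by (simp add: in_Lq_def abs_of_nonneg[OF g(1)])
  moreover have "(\<integral>x. g n x \<partial>lborel) powr e * (\<integral>x. g n x powr m \<partial>lborel) \<le> HLS_denominator e m h"
    using HLS_denominator_mono[OF _ g hi] e m g unfolding HLS_denominator_def by simp
  moreover have "g n y \<noteq> 0 \<Longrightarrow> norm y \<le> real n" for y by (simp add: g_def indicator_def split: if_splits)
  ultimately show ?thesis using gm gi g n by (intro that[of "g n" "real n"]) auto
qed

lemma adm_class_normalise:
  fixes g :: "'a::euclidean_space \<Rightarrow> real"
  assumes s: "0 < s" "s < real DIM('a)" and q: "0 < q"
    and [measurable]: "g \<in> borel_measurable borel" and nn: "\<And>y. 0 \<le> g y"
    and supp: "\<And>y. g y \<noteq> 0 \<Longrightarrow> norm y \<le> R"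
    and int: "integrable lborel g" "integrable lborel (\<lambda>x. g x powr m)"
    and L: "0 < (\<integral>x. g x \<partial>lborel)" and M: "0 < M"
  defines "k \<equiv> M / (\<integral>x. g x \<partial>lborel)"
  obtains \<rho> :: "'a \<Rightarrow> real" where "\<rho> \<in> adm_class m M" "riesz_energy s q \<rho> = ennreal (k powr q) * riesz_energy s q g"
    "(\<integral>x. \<rho> x powr m \<partial>lborel) = k powr m * (\<integral>x. g x powr m \<partial>lborel)"
proof -
  have k: "0 < k" using L M by (simp add: k_def)
  define g' where "g' y = k * g y" for y
  have [measurable]: "g' \<in> borel_measurable borel" unfolding g'_def by measurable
  have g'pow: "g' y powr m = k powr m * g y powr m" for y using k nn[of y] by (simp add: g'_def powr_mult)
  have bnd: "g y * norm y \<le> max R 0 * g y" for y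
    using supp[of y] nn[of y] by (cases "g y = 0") (auto simp: mult.commute intro: mult_right_mono)
  have moment: "integrable lborel (\<lambda>y. g' y *\<^sub>R y)"
  proof (rule Bochner_Integration.integrable_bound[of _ "\<lambda>y. max R 0 * g' y"])
    show "integrable lborel (\<lambda>y. max R 0 * g' y)" using int(1) by (simp add: g'_def)
    show "AE y in lborel. norm (g' y *\<^sub>R y) \<le> norm (max R 0 * g' y)"
      using nn k mult_left_mono[OF bnd, of k] by (intro AE_I2) (simp add: g'_def abs_mult mult_ac)
  qed measurable
  define t where "t = (1/M) *\<^sub>R (\<integral>x. g' x *\<^sub>R x \<partial>lborel)"
  show ?thesis
  proof (rule that[of "\<lambda>y. g' (y + t)"])
    have "integrable lborel (\<lambda>x. g' x powr m)" unfolding g'pow using int(2) by simp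
    moreover have "(\<integral>x. g' x \<partial>lborel) = M" using L by (simp add: g'_def k_def)
    ultimately show "(\<lambda>y. g' (y + t)) \<in> adm_class m M"
      unfolding t_def using k nn int(1) M moment
      by (intro adm_class_translate) (auto simp: g'_def)
    show "riesz_energy s q (\<lambda>y. g' (y + t)) = ennreal (k powr q) * riesz_energy s q g"
      using riesz_energy_translate[of g' s q t] riesz_energy_cmult[OF s _ q, of k g] k
      by (simp add: g'_def[abs_def])
    show "(\<integral>x. g' (x + t) powr m \<partial>lborel) = k powr m * (\<integral>x. g x powr m \<partial>lborel)"
      using lborel_integral_translate[of "\<lambda>y. g' y powr m" t] by (simp add: g'pow)
  qed
qed

text \<open>Truncation, normalisation to mass \<open>M\<close> and centring do not decrease the HLS quotient; at
  \<open>m = m\<^sub>c\<close> it is invariant under \<open>h \<mapsto> k h\<close> because \<open>q = m + e\<close>.\<close>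

lemma exists_free_energy_neg_crit:
  fixes h :: "'a::euclidean_space \<Rightarrow> real"
  assumes p: "1 < p" and sp: "0 < s * p" "s * p < real DIM('a)"
    and m: "m = crit_exp DIM('a) s p" and chi: "0 < chi" and M: "0 < M"
    and h: "h \<in> HLS_domain m"
    and lt: "ereal (sob_exp DIM('a) s p / (chi * M powr (s * conj_exp p / real DIM('a))))
             < enn2ereal (HLS_numerator s (conj_exp p) h) / ereal (HLS_denominator (s * conj_exp p / real DIM('a)) m h)"
  shows "\<exists>\<rho>\<in>(adm_class m M :: ('a \<Rightarrow> real) set). free_energy s p m chi \<rho> < 0"
proof -
  note s = exponent_bounds(1,2)[OF p sp]
  define q where "q = conj_exp p"
  define e where "e = s * q / real DIM('a)"
  define sob where "sob = sob_exp DIM('a) s p"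
  define T where "T = sob / (chi * M powr e)"
  have q: "1 < q" using exponent_bounds(3)[OF p sp] by (simp add: q_def)
  have m1: "1 < m" using crit_exp_gt_one[OF p sp] m by simp
  have e: "0 < e" using s q by (simp add: e_def)
  have qme: "q = m + e" using m by (simp add: crit_exp_def q_def e_def)
  have sobq: "sob / q = 1 / (m - 1)" using sob_exp_div_conj_exp[OF p sp] m by (simp add: sob_def q_def)
  have T: "0 < T" using sob_exp_pos[OF p sp] chi M by (simp add: T_def sob_def)
  define d where "d = HLS_denominator e m h"
  have d: "0 < d" unfolding d_def using HLS_denominator_pos[OF h] m1 by simp
  have "ennreal (T * d) < HLS_numerator s q h"
    using less_enn2ereal_divide_imp[OF d less_imp_le[OF T]] lt by (simp add: T_def d_def e_def q_def sob_def)
  from HLS_numerator_less_truncation[OF s less_trans[OF zero_less_one q] less_trans[OF zero_less_one m1]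
      less_imp_le[OF e] h this]
  obtain g :: "'a \<Rightarrow> real" and R where gm[measurable]: "g \<in> borel_measurable borel"
    and g: "\<And>y. 0 \<le> g y" "\<And>y. g y \<noteq> 0 \<Longrightarrow> norm y \<le> R"
    and gi: "integrable lborel g" "integrable lborel (\<lambda>x. g x powr m)" and L: "0 < (\<integral>x. g x \<partial>lborel)"
    and Pg: "ennreal (T * d) < riesz_energy s q g"
    and dg: "(\<integral>x. g x \<partial>lborel) powr e * (\<integral>x. g x powr m \<partial>lborel) \<le> d"
    unfolding d_def by blast
  define k where "k = M / (\<integral>x. g x \<partial>lborel)"
  have k: "0 < k" using L M by (simp add: k_def)
  obtain \<rho> where \<rho>: "\<rho> \<in> (adm_class m M :: ('a \<Rightarrow> real) set)"
    and P\<rho>: "riesz_energy s q \<rho> = ennreal (k powr q) * riesz_energy s q g"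
    and E\<rho>: "(\<integral>x. \<rho> x powr m \<partial>lborel) = k powr m * (\<integral>x. g x powr m \<partial>lborel)"
    using adm_class_normalise[OF s less_trans[OF zero_less_one q] gm g gi L M] unfolding k_def by blast
  show ?thesis
  proof (cases "riesz_energy s q g")
    case top
    then have "free_energy s p m chi \<rho> = -\<infinity>"
      using P\<rho> k by (intro free_energy_riesz_energy_top[OF _ chi p]) (simp add: q_def ennreal_mult_top)
    then show ?thesis using \<rho> by force
  next
    case (real P)
    define Eg where "Eg = (\<integral>x. g x powr m \<partial>lborel)"
    have Eg: "0 \<le> Eg" unfolding Eg_def by (rule integral_powr_nonneg)
    have "T * d < P" using Pg real T d by (simp add: ennreal_less_iff)
    moreover have "T * ((\<integral>x. g x \<partial>lborel) powr e * Eg) \<le> T * d"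
      using dg T unfolding Eg_def by (intro mult_left_mono) auto
    ultimately have TP: "T * ((\<integral>x. g x \<partial>lborel) powr e * Eg) < P" by linarith
    have "1 / (m - 1) * (k powr m * Eg) = chi / q * k powr m * (k powr e * T * (\<integral>x. g x \<partial>lborel) powr e * Eg)"
    proof -
      have "k powr e * (\<integral>x. g x \<partial>lborel) powr e = M powr e"
        using k L by (simp add: k_def powr_mult[symmetric])
      then have X: "k powr e * T * (\<integral>x. g x \<partial>lborel) powr e = sob / chi"
        using M chi by (simp add: T_def field_simps)
      have "chi / q * k powr m * (k powr e * T * (\<integral>x. g x \<partial>lborel) powr e * Eg)
          = chi / q * k powr m * (sob / chi * Eg)" by (simp only: X)
      also have "\<dots> = sob / q * (k powr m * Eg)" using chi by simp
      finally show ?thesis using sobq by simp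
    qed
    also have "\<dots> < chi / q * k powr m * (k powr e * P)"
      using TP chi q k by (intro mult_strict_left_mono) (auto simp: mult.assoc)
    also have "\<dots> = chi / q * (k powr q * P)"
      using qme by (simp add: powr_add mult_ac)
    finally have "free_energy s p m chi \<rho> < 0"
      using free_energy_riesz_energy_finite[of s p \<rho> "k powr q * P" m chi] P\<rho> E\<rho> real k
      by (simp add: q_def Eg_def ennreal_mult)
    then show ?thesis using \<rho> by blast
  qed
qed

lemma Inf_free_energy_crit_gt_crit_mass:
  fixes p s m chi M :: real
  assumes p: "1 < p" and sp: "0 < s * p" "s * p < real DIM('a::euclidean_space)"
    and m: "m = crit_exp DIM('a) s p" and chi: "0 < chi" and M: "0 < M"
    and McM: "crit_mass TYPE('a) p s chi < M"
  shows "Inf (free_energy s p m chi ` (adm_class m M :: ('a \<Rightarrow> real) set)) = -\<infinity>"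
proof -
  have "ereal (sob_exp DIM('a) s p / (chi * M powr (s * conj_exp p / real DIM('a)))) < HLS_const TYPE('a) p m s"
    using le_crit_mass_iff[OF p sp m chi M] McM by auto
  then obtain h where "h \<in> (HLS_domain m :: ('a \<Rightarrow> real) set)"
    "ereal (sob_exp DIM('a) s p / (chi * M powr (s * conj_exp p / real DIM('a))))
      < enn2ereal (HLS_numerator s (conj_exp p) h) / ereal (HLS_denominator (s * conj_exp p / real DIM('a)) m h)"
    unfolding HLS_const_crit_eq[OF p sp m] by (auto simp: less_SUP_iff)
  from exists_free_energy_neg_crit[OF p sp m chi M this]
  obtain \<rho> where \<rho>: "\<rho> \<in> (adm_class m M :: ('a \<Rightarrow> real) set)" and F: "free_energy s p m chi \<rho> < 0"
    by blast
  show ?thesis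
  proof (cases "free_energy s p m chi \<rho>")
    case (real f)
    have a: "0 < real DIM('a) * (m - 1)" using crit_exp_gt_one[OF p sp] m by simp
    show ?thesis
    proof (rule ereal_bot)
      fix B :: real
      obtain c where "0 < c" "c powr (real DIM('a) * (m - 1)) * f < B"
        using powr_mult_neg_unbounded_below[OF _ a] F real by auto
      then show "Inf (free_energy s p m chi ` (adm_class m M :: ('a \<Rightarrow> real) set)) \<le> ereal B"
        using Inf_free_energy_le_mass_dilate_crit[OF p sp m chi \<rho> real] by (meson ereal_less_eq(3) less_imp_le order_trans)
    qed
  next
    case MInf
    then show ?thesis using INF_lower[OF \<rho>, of "free_energy s p m chi"] by simp
  qed (use F in simp)
qed

theorem mainTheorem12:
  fixes p s m chi M :: real
  assumes "1 < p" and "0 < s * p" and "s * p < real DIM('a::euclidean_space)"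
    and "1 < m" and "0 < chi" and "0 < M"
  defines "I \<equiv> Inf (free_energy s p m chi ` (adm_class m M :: ('a \<Rightarrow> real) set))"
    and "mc \<equiv> crit_exp DIM('a) s p"
    and "Mc \<equiv> crit_mass TYPE('a) p s chi"
  shows "(m < mc \<longrightarrow> I = -\<infinity>)
    \<and> (m = mc \<longrightarrow> ((M \<le> Mc \<longrightarrow> I = 0) \<and> (Mc < M \<longrightarrow> I = -\<infinity>)))
    \<and> (mc < m \<longrightarrow> -\<infinity> < I \<and> I < 0)"
  unfolding I_def mc_def Mc_def
  using Inf_free_energy_subcritical[OF assms(1-4) _ assms(5,6)]
    Inf_free_energy_crit_le_crit_mass[OF assms(1-3) _ assms(5,6)]
    Inf_free_energy_crit_gt_crit_mass[OF assms(1-3) _ assms(5,6)]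
    Inf_free_energy_supercritical_bounded[OF assms(1-4) _ assms(5,6)]
    Inf_free_energy_supercritical_neg[OF assms(1-4) _ assms(5,6)]
  by blast

end
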